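(* Let $s>0$, $Y>0$ and $\tau\geq 0$, and consider the delay differential system \[ \dot x(t)=x(t)(1-x(t))-y(t)x(t),\qquad \dot y(t)=-sy(t)+Ye^{-s\tau}y(t-\tau)x(t-\tau), \] with initial data $(x(t),y(t))=(\phi(t),\psi(t))$ for $t\in[-\tau,0]$, where $(\phi,\psi)\in X:=C([-\tau,0],\mathbb{R}_+)\times C([-\tau,0],\mathbb{R}_+)$. \begin{enumerate} \item The solutions exist, are unique, and remain nonnegative for all $t\geq 0$. \item $\limsup_{t\to\infty}x(t)\leq 1$ and $\limsup_{t\to\infty}y(t)\leq \frac{1}{4s}Ye^{-s\tau}(s+1)^2$. \item If the initial data lie in \[ X^0=\{(\phi,\psi)\in X:\ \phi(0)>0 \text{ and there exists } \theta\in[-\tau,0] \text{ with } \phi(\theta)\psi(\theta)>0\}, \] then $x(t)>0$ for all $t>0$ and there exists $T\geq 0$ such that $y(t)>0$ for all $t>T$. \end{enumerate}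
   Context: $\mathbb{R}_+=\{x\in\mathbb{R}: x\geq 0\}$. $C([-\tau,0],\mathbb{R}_+)$ is the Banach space of continuous functions $[-\tau,0]\to\mathbb{R}_+$ with the uniform norm. *)

theory Defs
  imports "HOL-Analysis.Analysis"
begin

text \<open>An element of C([-tau,0], R_+): a function continuous on [-tau,0] with
  nonnegative values there (values outside [-tau,0] are irrelevant).\<close>
definition init_datum :: "real \<Rightarrow> (real \<Rightarrow> real) \<Rightarrow> bool" where
  "init_datum tau \<phi> \<longleftrightarrow> continuous_on {-tau..0} \<phi> \<and> (\<forall>\<theta>\<in>{-tau..0}. \<phi> \<theta> \<ge> 0)"

definition dde_solution ::
  "real \<Rightarrow> real \<Rightarrow> real \<Rightarrow> (real \<Rightarrow> real) \<Rightarrow> (real \<Rightarrow> real)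
     \<Rightarrow> (real \<Rightarrow> real) \<Rightarrow> (real \<Rightarrow> real) \<Rightarrow> bool" where
  "dde_solution s Y tau \<phi> \<psi> x y \<longleftrightarrow>
     continuous_on {-tau..} x \<and> continuous_on {-tau..} y \<and>
     (\<forall>t\<in>{-tau..0}. x t = \<phi> t \<and> y t = \<psi> t) \<and>
     (\<forall>t\<ge>0. (x has_real_derivative (x t * (1 - x t) - y t * x t)) (at t within {0..}) \<and>
             (y has_real_derivative (- s * y t + Y * exp (- s * tau) * y (t - tau) * x (t - tau)))
                (at t within {0..}))"

end

theory Submission
  imports Defs
begin

text \<open>
  Existence is first proved for a truncated system, in which \<open>x\<close> and \<open>y\<close> are clamped to
  \<open>[0, A]\<close> and \<open>[0, B]\<close>: its right-hand side is globally Lipschitz, so a Picard operator on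
  exponentially weighted bounded continuous functions is a contraction and Banach's fixed point
  theorem yields a global solution. Comparison arguments keep this solution inside
  \<open>[0, A] \<times> [0, B]\<close>, so the clamps are inactive and it solves the original system. The key
  estimate is that \<open>W t = K * x (t - tau) + y t\<close>, with \<open>K = Y * exp (- s * tau)\<close>, satisfies
  \<open>W' \<le> K * (1 + s)\<^sup>2 / 4 - s * W\<close>, because the predation terms cancel; it also gives the
  bound on \<open>limsup y\<close>, while \<open>x' \<le> x * (1 - x)\<close> gives \<open>limsup x \<le> 1\<close>.

  Uniqueness follows from a Gronwall-type argument: on a time step short compared with the
  Lipschitz constant, the difference of two solutions is at most half of its own maximum.
  Positivity comes from the monotonicity of \<open>exp (2 * C * t) * x t\<close> and \<open>exp (s * t) * y t\<close>.
\<close>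

section \<open>Comparison principles for scalar differential inequalities\<close>

lemma has_real_derivative_barrier:
  fixes f f' :: "real \<Rightarrow> real"
  assumes "{a..b} \<subseteq> S"
    and der: "\<And>t. t \<in> {a..b} \<Longrightarrow> (f has_real_derivative f' t) (at t within S)"
    and init: "f a \<le> M"
    and nonincr: "\<And>t. t \<in> {a..b} \<Longrightarrow> f t > M \<Longrightarrow> f' t \<le> 0"
    and t: "t \<in> {a..b}"
  shows "f t \<le> M"
proof (rule ccontr)
  assume "\<not> f t \<le> M"
  hence ft: "f t > M" by simp
  have der_at: "(f has_real_derivative f' u) (at u within {a..t})" if "u \<in> {a..t}" for u
    by (rule DERIV_subset[OF der]) (use that t \<open>{a..b} \<subseteq> S\<close> in auto)
  define S where "S = {a..t} \<inter> f -` {..M}"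
  have "closed S"
    unfolding S_def by (rule continuous_closed_preimage[OF DERIV_continuous_on[OF der_at]]) auto
  moreover have "a \<in> S" "bdd_above S"
    using init t by (auto simp: S_def intro: bdd_aboveI[where M=t])
  ultimately have "Sup S \<in> S"
    using closed_contains_Sup by blast
  hence t0: "a \<le> Sup S" "Sup S \<le> t" "f (Sup S) \<le> M"
    by (auto simp: S_def)
  with ft have "Sup S < t"
    by (cases "Sup S = t") auto
  have above: "f u > M" if "Sup S < u" "u \<le> t" for u
  proof (rule ccontr)
    assume "\<not> f u > M"
    hence "u \<in> S"
      using that t0 by (auto simp: S_def)
    hence "u \<le> Sup S"
      using \<open>bdd_above S\<close> by (rule cSup_upper)
    with that show False by simp
  qed
  have "\<exists>u\<in>{Sup S<..<t}. f t - f (Sup S) = f' u * (t - Sup S)"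
  proof (rule mvt_simple[OF \<open>Sup S < t\<close>])
    fix u assume "Sup S \<le> u" "u \<le> t"
    hence "(f has_real_derivative f' u) (at u within {Sup S..t})"
      using t0 by (intro DERIV_subset[OF der_at]) auto
    thus "(f has_derivative (\<lambda>h. f' u * h)) (at u within {Sup S..t})"
      by (simp add: has_field_derivative_def)
  qed
  then obtain u where u: "Sup S < u" "u < t" "f t - f (Sup S) = f' u * (t - Sup S)"
    by auto
  have "f' u \<le> 0"
    using nonincr[of u] above[of u] u t0 t by auto
  hence "f' u * (t - Sup S) \<le> 0"
    using u by (simp add: mult_nonpos_nonneg)
  with u t0 ft show False
    by linarith
qed

lemma has_real_derivative_barrier_unbounded:
  fixes f f' :: "real \<Rightarrow> real"
  assumes "{a..} \<subseteq> S"
    and "\<And>t. t \<ge> a \<Longrightarrow> (f has_real_derivative f' t) (at t within S)"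
    and "f a \<le> M"
    and "\<And>t. t \<ge> a \<Longrightarrow> f t > M \<Longrightarrow> f' t \<le> 0"
    and "t \<ge> a"
  shows "f t \<le> M"
  by (rule has_real_derivative_barrier[of a t S f f']) (use assms in auto)

lemma has_real_derivative_nonneg_imp_increasing:
  fixes f f' :: "real \<Rightarrow> real"
  assumes "{a..} \<subseteq> S"
    and "\<And>t. t \<ge> a \<Longrightarrow> (f has_real_derivative f' t) (at t within S)"
    and "\<And>t. t \<ge> a \<Longrightarrow> f' t \<ge> 0"
    and "t \<ge> a"
  shows "f a \<le> f t"
proof -
  have "- f t \<le> - f a"
    by (rule has_real_derivative_barrier_unbounded[where f="\<lambda>t. - f t" and f'="\<lambda>t. - f' t"])
       (use assms in \<open>auto intro: derivative_intros\<close>)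
  thus ?thesis by simp
qed

lemma has_real_derivative_eventually_le:
  fixes f f' :: "real \<Rightarrow> real"
  assumes "{a..} \<subseteq> S"
    and der: "\<And>t. t \<ge> a \<Longrightarrow> (f has_real_derivative f' t) (at t within S)"
    and decrease: "\<And>t. t \<ge> a \<Longrightarrow> f t > M \<Longrightarrow> f' t \<le> - d" and "d > 0"
  shows "\<exists>T\<ge>a. \<forall>t\<ge>T. f t \<le> M"
proof (cases "\<exists>t\<ge>a. f t \<le> M")
  case True
  then obtain T where T: "T \<ge> a" "f T \<le> M" by auto
  have "f' t \<le> 0" if "t \<ge> T" "f t > M" for t
    using decrease[of t] that T \<open>d > 0\<close> by linarith
  moreover have "{T..} \<subseteq> S"
    using T \<open>{a..} \<subseteq> S\<close> by auto
  ultimately have "f t \<le> M" if "t \<ge> T" for t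
    using has_real_derivative_barrier_unbounded[of T S f f' M t] der T that by simp
  thus ?thesis using T by auto
next
  case False
  hence above: "\<And>t. t \<ge> a \<Longrightarrow> f t > M" by auto
  define t where "t = a + (f a - M) / d + 1"
  have "t \<ge> a" using above[of a] \<open>d > 0\<close> by (simp add: t_def)
  \<comment> \<open>with slope at most \<open>-d\<close>, \<open>f\<close> would have to drop below \<open>M\<close> by time \<open>t\<close>\<close>
  have "f t + d * t \<le> f a + d * a"
  proof (rule has_real_derivative_barrier_unbounded[of a S "\<lambda>t. f t + d * t" "\<lambda>t. f' t + d"])
    fix u assume "u \<ge> a"
    show "((\<lambda>t. f t + d * t) has_real_derivative f' u + d) (at u within S)"
      using der[OF \<open>u \<ge> a\<close>] by (auto intro!: derivative_eq_intros)
    show "f' u + d \<le> 0"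
      using decrease[OF \<open>u \<ge> a\<close> above[OF \<open>u \<ge> a\<close>]] by simp
  qed (use \<open>{a..} \<subseteq> S\<close> \<open>t \<ge> a\<close> in auto)
  also have "\<dots> = M + d * (t - 1)"
    using \<open>d > 0\<close> by (simp add: t_def field_simps)
  finally have False
    using above[OF \<open>t \<ge> a\<close>] \<open>d > 0\<close> by (simp add: right_diff_distrib)
  thus ?thesis ..
qed

lemma has_real_derivative_shift:
  fixes f :: "real \<Rightarrow> real"
  assumes "(f has_real_derivative D) (at (t - c) within {a..})"
  shows "((\<lambda>t. f (t - c)) has_real_derivative D) (at t within {a + c..})"
proof -
  have "(f has_real_derivative D) (at ((\<lambda>t. t - c) t) within (\<lambda>t. t - c) ` {a + c..})"
    using assms by (rule DERIV_subset) auto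
  moreover have "((\<lambda>t. t - c) has_real_derivative 1) (at t within {a + c..})"
    by (auto intro!: derivative_eq_intros)
  ultimately have "(f \<circ> (\<lambda>t. t - c) has_real_derivative D * 1) (at t within {a + c..})"
    by (rule DERIV_image_chain)
  thus ?thesis by (simp add: o_def)
qed

lemma linear_differential_inequality:
  fixes f f' :: "real \<Rightarrow> real"
  assumes "s > 0" and "{a..} \<subseteq> S"
    and der: "\<And>t. t \<ge> a \<Longrightarrow> (f has_real_derivative f' t) (at t within S)"
    and le: "\<And>t. t \<ge> a \<Longrightarrow> f' t \<le> c - s * f t"
  shows "\<And>t. t \<ge> a \<Longrightarrow> f t \<le> max (f a) (c / s)"
    and "\<And>e. e > 0 \<Longrightarrow> \<exists>T. \<forall>t\<ge>T. f t \<le> c / s + e"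
proof -
  show "f t \<le> max (f a) (c / s)" if "t \<ge> a" for t
  proof (rule has_real_derivative_barrier_unbounded[of a S f f'])
    fix u assume "u \<ge> a" "f u > max (f a) (c / s)"
    hence "c < f u * s"
      using \<open>s > 0\<close> by (simp add: divide_less_eq)
    thus "f' u \<le> 0"
      using le[OF \<open>u \<ge> a\<close>] by (simp add: mult.commute)
  qed (use \<open>{a..} \<subseteq> S\<close> der that in auto)
  show "\<exists>T. \<forall>t\<ge>T. f t \<le> c / s + e" if "e > 0" for e
  proof -
    have "\<exists>T\<ge>a. \<forall>t\<ge>T. f t \<le> c / s + e"
    proof (rule has_real_derivative_eventually_le[of a S f f' _ "s * e"])
      fix u assume "u \<ge> a" "f u > c / s + e"
      hence "c + e * s < f u * s"
        using \<open>s > 0\<close> by (simp add: field_simps)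
      thus "f' u \<le> - (s * e)"
        using le[OF \<open>u \<ge> a\<close>] by (simp add: algebra_simps)
    qed (use \<open>{a..} \<subseteq> S\<close> der \<open>s > 0\<close> \<open>e > 0\<close> in auto)
    thus ?thesis by blast
  qed
qed

lemma has_real_derivative_increment_bound:
  fixes g g' :: "real \<Rightarrow> real"
  assumes "a \<le> u"
    and "\<And>v. v \<in> {a..u} \<Longrightarrow> (g has_real_derivative g' v) (at v within {a..u})"
    and "\<And>v. v \<in> {a..u} \<Longrightarrow> \<bar>g' v\<bar> \<le> B"
  shows "\<bar>g u - g a\<bar> \<le> B * (u - a)"
  using field_differentiable_bound[of "{a..u}" g g' B u a] assms by auto

section \<open>Uniqueness\<close>

lemma delay_increment_bound_step:
  fixes e :: "real \<Rightarrow> real"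
  assumes "tau \<ge> 0" "L \<ge> 0" "0 \<le> a" "a < b" "L * (b - a) \<le> 1 / 2"
    and cont: "continuous_on {a..b} e"
    and nonneg: "\<And>u. u \<in> {a..b} \<Longrightarrow> e u \<ge> 0"
    and zero: "\<And>u. u \<in> {-tau..a} \<Longrightarrow> e u = 0"
    and increment: "\<And>u M. u \<in> {a..b} \<Longrightarrow> (\<And>v. v \<in> {a - tau..u} \<Longrightarrow> e v \<le> M) \<Longrightarrow>
                      e u \<le> e a + L * (u - a) * M"
    and u: "u \<in> {a..b}"
  shows "e u = 0"
proof -
  obtain m where m: "m \<in> {a..b}" and max: "\<And>u. u \<in> {a..b} \<Longrightarrow> e u \<le> e m"
    using continuous_attains_sup[OF compact_Icc _ cont] \<open>a < b\<close> by auto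
  have "e a = 0"
    using zero \<open>tau \<ge> 0\<close> \<open>a \<ge> 0\<close> by simp
  hence "e m \<ge> 0"
    using max[of a] \<open>a < b\<close> by simp
  have "e v \<le> e m" if "v \<in> {a - tau..m}" for v
    using zero[of v] max[of v] that m \<open>e m \<ge> 0\<close> \<open>a \<ge> 0\<close> by (cases "v \<le> a") auto
  hence "e m \<le> L * (m - a) * e m"
    using increment[OF m] \<open>e a = 0\<close> by simp
  also have "\<dots> \<le> 1 / 2 * e m"
  proof (rule mult_right_mono)
    show "L * (m - a) \<le> 1 / 2"
      using m \<open>L \<ge> 0\<close> \<open>L * (b - a) \<le> 1 / 2\<close> mult_left_mono[of "m - a" "b - a" L] by auto
  qed (fact \<open>e m \<ge> 0\<close>)
  finally have "e m \<le> 0"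
    by simp
  thus ?thesis
    using max[OF u] nonneg[OF u] by simp
qed

lemma delay_increment_bound_imp_zero:
  fixes e :: "real \<Rightarrow> real"
  assumes "tau \<ge> 0" and "L \<ge> 0"
    and cont: "continuous_on {0..t} e"
    and nonneg: "\<And>u. u \<in> {-tau..t} \<Longrightarrow> e u \<ge> 0"
    and zero: "\<And>u. u \<in> {-tau..0} \<Longrightarrow> e u = 0"
    and increment: "\<And>a u M. 0 \<le> a \<Longrightarrow> a \<le> u \<Longrightarrow> u \<le> t \<Longrightarrow>
                      (\<And>v. v \<in> {a - tau..u} \<Longrightarrow> e v \<le> M) \<Longrightarrow> e u \<le> e a + L * (u - a) * M"
    and u: "u \<in> {-tau..t}"
  shows "e u = 0"
proof -
  define h where "h = 1 / (2 * L + 1)"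
  have "h > 0" "L * h \<le> 1 / 2"
    using \<open>L \<ge> 0\<close> by (auto simp: h_def field_simps)
  have "e u = 0" if "u \<in> {-tau..t}" "u \<le> real n * h" for n u
    using that
  proof (induction n arbitrary: u)
    case 0
    thus ?case using zero by auto
  next
    case (Suc n)
    define a where "a = real n * h"
    define b where "b = min (a + h) t"
    show ?case
    proof (cases "u \<le> a")
      case True
      thus ?thesis using Suc by (simp add: a_def)
    next
      case False
      hence "0 \<le> a" "a < b" "b \<le> t" "b - a \<le> h" "u \<in> {a..b}"
        using Suc.prems \<open>h > 0\<close> by (auto simp: a_def b_def algebra_simps)
      have "L * (b - a) \<le> 1 / 2"
        using \<open>L \<ge> 0\<close> \<open>L * h \<le> 1 / 2\<close> \<open>b - a \<le> h\<close> mult_left_mono[of "b - a" h L] by linarith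
      show ?thesis
      proof (rule delay_increment_bound_step[of tau L a b e])
        show "continuous_on {a..b} e"
          using cont by (rule continuous_on_subset) (use \<open>0 \<le> a\<close> \<open>b \<le> t\<close> in auto)
        show "e v \<ge> 0" if "v \<in> {a..b}" for v
          using nonneg[of v] that \<open>0 \<le> a\<close> \<open>b \<le> t\<close> \<open>tau \<ge> 0\<close> by auto
        show "e v = 0" if "v \<in> {-tau..a}" for v
          using Suc.IH[of v] that \<open>a < b\<close> \<open>b \<le> t\<close> by (auto simp: a_def)
        show "e v \<le> e a + L * (v - a) * M"
          if "v \<in> {a..b}" "\<And>w. w \<in> {a - tau..v} \<Longrightarrow> e w \<le> M" for v M
          using increment[of a v M] that \<open>0 \<le> a\<close> \<open>b \<le> t\<close> by auto
      qed fact+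
    qed
  qed
  moreover obtain n where "t / h \<le> real n"
    using real_arch_simple by blast
  hence "u \<le> real n * h"
    using u \<open>h > 0\<close> by (simp add: field_simps)
  ultimately show ?thesis
    using u by blast
qed

lemma logistic_field_lipschitz:
  fixes a b a' b' C :: real
  assumes "\<bar>a\<bar> \<le> C" "\<bar>a'\<bar> \<le> C" "\<bar>b'\<bar> \<le> C"
  shows "\<bar>(a * (1 - a) - b * a) - (a' * (1 - a') - b' * a')\<bar> \<le> (1 + 3 * C) * (\<bar>a - a'\<bar> + \<bar>b - b'\<bar>)"
proof -
  have "(a * (1 - a) - b * a) - (a' * (1 - a') - b' * a') = (a - a') * (1 - a - a' - b') - (b - b') * a"
    by (simp add: algebra_simps)
  moreover have "\<bar>(a - a') * (1 - a - a' - b')\<bar> \<le> \<bar>a - a'\<bar> * (1 + 3 * C)"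
    unfolding abs_mult by (rule mult_left_mono) (use assms in auto)
  moreover have "\<bar>(b - b') * a\<bar> \<le> \<bar>b - b'\<bar> * (1 + 3 * C)"
    unfolding abs_mult by (rule mult_left_mono) (use assms in auto)
  ultimately show ?thesis
    by (simp add: algebra_simps) (smt (verit) abs_triangle_ineq4)
qed

lemma delay_field_lipschitz:
  fixes b c d b' c' d' C s K :: real
  assumes "\<bar>c\<bar> \<le> C" "\<bar>d'\<bar> \<le> C"
  shows "\<bar>(- s * b + K * d * c) - (- s * b' + K * d' * c')\<bar>
           \<le> \<bar>s\<bar> * \<bar>b - b'\<bar> + \<bar>K\<bar> * C * (\<bar>c - c'\<bar> + \<bar>d - d'\<bar>)"
proof -
  have "\<bar>(d - d') * c\<bar> \<le> \<bar>d - d'\<bar> * C"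
    unfolding abs_mult by (rule mult_left_mono) (use assms in auto)
  moreover have "\<bar>d' * (c - c')\<bar> \<le> C * \<bar>c - c'\<bar>"
    unfolding abs_mult by (rule mult_right_mono) (use assms in auto)
  ultimately have "\<bar>(d - d') * c + d' * (c - c')\<bar> \<le> C * (\<bar>c - c'\<bar> + \<bar>d - d'\<bar>)"
    by (smt (verit) abs_triangle_ineq distrib_left mult.commute)
  hence "\<bar>K * ((d - d') * c + d' * (c - c'))\<bar> \<le> \<bar>K\<bar> * C * (\<bar>c - c'\<bar> + \<bar>d - d'\<bar>)"
    unfolding abs_mult mult.assoc by (rule mult_left_mono) simp
  moreover have "(- s * b + K * d * c) - (- s * b' + K * d' * c')
                   = - s * (b - b') + K * ((d - d') * c + d' * (c - c'))"
    by (simp add: algebra_simps)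
  moreover have "\<bar>- s * (b - b')\<bar> = \<bar>s\<bar> * \<bar>b - b'\<bar>"
    by (simp add: abs_mult)
  ultimately show ?thesis
    by (smt (verit) abs_triangle_ineq)
qed

lemma dde_solution_difference_increment:
  assumes "tau \<ge> 0"
    and sol: "dde_solution s Y tau \<phi> \<psi> x y" and sol': "dde_solution s Y tau \<phi>' \<psi>' x' y'"
    and C: "\<And>v. v \<in> {-tau..u} \<Longrightarrow> \<bar>x v\<bar> \<le> C \<and> \<bar>y v\<bar> \<le> C \<and> \<bar>x' v\<bar> \<le> C \<and> \<bar>y' v\<bar> \<le> C"
    and "0 \<le> a" "a \<le> u"
    and M: "\<And>v. v \<in> {a - tau..u} \<Longrightarrow> \<bar>x v - x' v\<bar> + \<bar>y v - y' v\<bar> \<le> M"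
  shows "\<bar>x u - x' u\<bar> + \<bar>y u - y' u\<bar>
           \<le> \<bar>x a - x' a\<bar> + \<bar>y a - y' a\<bar> + (1 + 3 * C + \<bar>s\<bar> + \<bar>Y * exp (- s * tau)\<bar> * C) * (u - a) * M"
proof -
  define F where "F x y u = x u * (1 - x u) - y u * x u" for x y :: "real \<Rightarrow> real" and u
  define G where "G x y u = - s * y u + Y * exp (- s * tau) * y (u - tau) * x (u - tau)"
    for x y :: "real \<Rightarrow> real" and u
  have dx: "\<And>v. v \<ge> 0 \<Longrightarrow> ((\<lambda>v. x v - x' v) has_real_derivative F x y v - F x' y' v) (at v within {0..})"
    and dy: "\<And>v. v \<ge> 0 \<Longrightarrow> ((\<lambda>v. y v - y' v) has_real_derivative G x y v - G x' y' v) (at v within {0..})"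
    using sol sol' by (auto simp: dde_solution_def F_def G_def intro!: DERIV_diff)
  have "C \<ge> 0"
    using C[of u] \<open>0 \<le> a\<close> \<open>a \<le> u\<close> \<open>tau \<ge> 0\<close> by auto
  have "\<bar>(x u - x' u) - (x a - x' a)\<bar> \<le> (1 + 3 * C) * M * (u - a)"
  proof (rule has_real_derivative_increment_bound[of a u _ "\<lambda>v. F x y v - F x' y' v"])
    fix v assume v: "v \<in> {a..u}"
    show "((\<lambda>v. x v - x' v) has_real_derivative F x y v - F x' y' v) (at v within {a..u})"
      using v \<open>0 \<le> a\<close> by (intro DERIV_subset[OF dx]) auto
    have "\<bar>F x y v - F x' y' v\<bar> \<le> (1 + 3 * C) * (\<bar>x v - x' v\<bar> + \<bar>y v - y' v\<bar>)"
      unfolding F_def using C[of v] v \<open>0 \<le> a\<close> \<open>tau \<ge> 0\<close> by (intro logistic_field_lipschitz) auto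
    also have "\<dots> \<le> (1 + 3 * C) * M"
      using M[of v] v \<open>C \<ge> 0\<close> \<open>tau \<ge> 0\<close> by (intro mult_left_mono) auto
    finally show "\<bar>F x y v - F x' y' v\<bar> \<le> (1 + 3 * C) * M" .
  qed (fact \<open>a \<le> u\<close>)
  moreover have "\<bar>(y u - y' u) - (y a - y' a)\<bar> \<le> (\<bar>s\<bar> + \<bar>Y * exp (- s * tau)\<bar> * C) * M * (u - a)"
  proof (rule has_real_derivative_increment_bound[of a u _ "\<lambda>v. G x y v - G x' y' v"])
    fix v assume v: "v \<in> {a..u}"
    show "((\<lambda>v. y v - y' v) has_real_derivative G x y v - G x' y' v) (at v within {a..u})"
      using v \<open>0 \<le> a\<close> by (intro DERIV_subset[OF dy]) auto
    have "\<bar>G x y v - G x' y' v\<bar>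
            \<le> \<bar>s\<bar> * \<bar>y v - y' v\<bar> + \<bar>Y * exp (- s * tau)\<bar> * C
                 * (\<bar>x (v - tau) - x' (v - tau)\<bar> + \<bar>y (v - tau) - y' (v - tau)\<bar>)"
      unfolding G_def using C[of "v - tau"] v \<open>0 \<le> a\<close> \<open>tau \<ge> 0\<close> by (intro delay_field_lipschitz) auto
    also have "\<dots> \<le> \<bar>s\<bar> * M + \<bar>Y * exp (- s * tau)\<bar> * C * M"
      using M[of v] M[of "v - tau"] v \<open>C \<ge> 0\<close> \<open>tau \<ge> 0\<close> by (intro add_mono mult_left_mono) auto
    finally show "\<bar>G x y v - G x' y' v\<bar> \<le> (\<bar>s\<bar> + \<bar>Y * exp (- s * tau)\<bar> * C) * M"
      by (simp add: algebra_simps)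
  qed (fact \<open>a \<le> u\<close>)
  ultimately show ?thesis
    by (simp add: algebra_simps) (smt (verit) abs_triangle_ineq)
qed

lemma dde_solution_unique:
  assumes "tau \<ge> 0"
    and sol: "dde_solution s Y tau \<phi> \<psi> x y" and sol': "dde_solution s Y tau \<phi> \<psi> x' y'"
    and "t \<ge> -tau"
  shows "x t = x' t \<and> y t = y' t"
proof -
  have cont: "continuous_on S f" if "S \<subseteq> {-tau..}" "f \<in> {x, y, x', y'}" for S f
    using sol sol' continuous_on_subset that by (auto simp: dde_solution_def)
  obtain C where C: "\<And>u. u \<in> {-tau..t} \<Longrightarrow> \<bar>x u\<bar> + \<bar>y u\<bar> + \<bar>x' u\<bar> + \<bar>y' u\<bar> \<le> C"
  proof -
    have "continuous_on {-tau..t} (\<lambda>u. \<bar>x u\<bar> + \<bar>y u\<bar> + \<bar>x' u\<bar> + \<bar>y' u\<bar>)"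
      by (intro continuous_intros cont) auto
    from continuous_attains_sup[OF compact_Icc _ this] \<open>t \<ge> -tau\<close> that show thesis
      by force
  qed
  hence C_abs: "\<bar>x u\<bar> \<le> C \<and> \<bar>y u\<bar> \<le> C \<and> \<bar>x' u\<bar> \<le> C \<and> \<bar>y' u\<bar> \<le> C" if "u \<in> {-tau..t}" for u
    using C[OF that] abs_ge_zero[of "x u"] abs_ge_zero[of "y u"] abs_ge_zero[of "x' u"]
      abs_ge_zero[of "y' u"] by linarith
  define e where "e u = \<bar>x u - x' u\<bar> + \<bar>y u - y' u\<bar>" for u
  have "e t = 0"
  proof (rule delay_increment_bound_imp_zero[where e=e and tau=tau and t=t
        and L="1 + 3 * C + \<bar>s\<bar> + \<bar>Y * exp (- s * tau)\<bar> * C"])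
    show "continuous_on {0..t} e"
      unfolding e_def by (intro continuous_intros cont) (use \<open>tau \<ge> 0\<close> in auto)
    show "e u \<le> e a + (1 + 3 * C + \<bar>s\<bar> + \<bar>Y * exp (- s * tau)\<bar> * C) * (u - a) * M"
      if "0 \<le> a" "a \<le> u" "u \<le> t" "\<And>v. v \<in> {a - tau..u} \<Longrightarrow> e v \<le> M" for a u M
      unfolding e_def using that C_abs
      by (intro dde_solution_difference_increment[OF \<open>tau \<ge> 0\<close> sol sol']) (auto simp: e_def)
    have "C \<ge> 0"
      using C_abs[of t] \<open>t \<ge> -tau\<close> by auto
    thus "0 \<le> 1 + 3 * C + \<bar>s\<bar> + \<bar>Y * exp (- s * tau)\<bar> * C"
      by simp
  qed (use \<open>tau \<ge> 0\<close> \<open>t \<ge> -tau\<close> sol sol' in \<open>auto simp: e_def dde_solution_def\<close>)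
  thus ?thesis
    unfolding e_def by (smt (verit) abs_ge_zero abs_eq_0)
qed

section \<open>Existence for globally Lipschitz delay systems\<close>

text \<open>Only \<open>t \<ge> 0\<close> matters; clamping the time at \<open>0\<close> makes \<open>weighted_primitive\<close> a bounded
  continuous function on the whole real line, i.e. an element of \<open>real \<Rightarrow>\<^sub>C real\<close>.\<close>

definition weighted_primitive :: "real \<Rightarrow> real \<Rightarrow> (real \<Rightarrow> real) \<Rightarrow> real \<Rightarrow> real" where
  "weighted_primitive lam c g t = exp (- lam * max 0 t) * (c + integral {0..max 0 t} g)"

lemma has_real_derivative_primitive:
  fixes g :: "real \<Rightarrow> real"
  assumes "continuous_on {0..} g" and "t \<ge> 0"
  shows "((\<lambda>v. c + integral {0..v} g) has_real_derivative g t) (at t within {0..})"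
proof -
  have "((\<lambda>v. integral {0..v} g) has_real_derivative g t) (at t within {0..t + 1})"
    by (rule integral_has_real_derivative) (use assms in \<open>auto intro: continuous_on_subset\<close>)
  moreover have "at t within {0..t + 1} = at t within {0..}"
    by (rule at_within_nhd[of _ "{-1<..<t + 1}"]) (use \<open>t \<ge> 0\<close> in auto)
  ultimately show ?thesis
    by (auto intro!: derivative_eq_intros)
qed

lemma continuous_on_weighted_primitive:
  fixes g :: "real \<Rightarrow> real"
  assumes "continuous_on {0..} g"
  shows "continuous_on UNIV (weighted_primitive lam c g)"
proof -
  have "isCont (\<lambda>t. integral {0..max 0 t} g) t" for t
  proof -
    define r where "r = \<bar>t\<bar> + 1"
    have "continuous_on {0..r} (\<lambda>v. integral {0..v} g)"
      by (rule indefinite_integral_continuous_1, rule integrable_continuous_real)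
         (use assms in \<open>auto intro: continuous_on_subset\<close>)
    hence "continuous_on {-r<..<r} ((\<lambda>v. integral {0..v} g) \<circ> max 0)"
      by (intro continuous_on_compose continuous_intros, rule continuous_on_subset)
         (auto simp: r_def)
    moreover have "t \<in> {-r<..<r}" by (auto simp: r_def)
    ultimately show ?thesis
      using continuous_on_eq_continuous_at[OF open_greaterThanLessThan]
      by (fastforce simp: o_def)
  qed
  thus ?thesis
    unfolding weighted_primitive_def
    by (intro continuous_intros continuous_at_imp_continuous_on) auto
qed

lemma exp_weighted_integral_bound:
  fixes g :: "real \<Rightarrow> real"
  assumes "lam > 0" "t \<ge> 0" "a \<ge> 0" "b \<ge> 0"
    and cont: "continuous_on {0..t} g"
    and growth: "\<And>u. u \<in> {0..t} \<Longrightarrow> \<bar>g u\<bar> \<le> a + b * exp (lam * u)"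
  shows "exp (- lam * t) * \<bar>integral {0..t} g\<bar> \<le> (a + b) / lam"
proof -
  have primitive: "((\<lambda>u. a + b * exp (lam * u)) has_integral
       ((a * t + b * exp (lam * t) / lam) - (a * 0 + b * exp (lam * 0) / lam))) {0..t}"
  proof (rule fundamental_theorem_of_calculus[OF \<open>t \<ge> 0\<close>])
    fix u assume "u \<in> {0..t}"
    have "((\<lambda>u. a * u + b * exp (lam * u) / lam) has_real_derivative a + b * exp (lam * u))
            (at u within {0..t})"
      using \<open>lam > 0\<close> by (auto intro!: derivative_eq_intros simp: field_simps)
    thus "((\<lambda>u. a * u + b * exp (lam * u) / lam) has_vector_derivative a + b * exp (lam * u))
            (at u within {0..t})"
      by (simp add: has_real_derivative_iff_has_vector_derivative)
  qed
  have "\<bar>integral {0..t} g\<bar> \<le> a * t + b * (exp (lam * t) - 1) / lam"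
    using integral_norm_bound_integral[OF integrable_continuous_real[OF cont]
        has_integral_integrable[OF primitive]] growth integral_unique[OF primitive]
    by (simp add: diff_divide_distrib right_diff_distrib)
  hence "exp (- lam * t) * \<bar>integral {0..t} g\<bar>
           \<le> exp (- lam * t) * (a * t + b * (exp (lam * t) - 1) / lam)"
    by (rule mult_left_mono) simp
  also have "\<dots> = a * (exp (- lam * t) * t) + b * (exp (- lam * t) * exp (lam * t) - exp (- lam * t)) / lam"
    by (simp add: field_simps)
  also have "\<dots> = a * (exp (- lam * t) * t) + b * (1 - exp (- lam * t)) / lam"
    by (simp add: exp_minus)
  also have "\<dots> \<le> a * (1 / lam) + b * 1 / lam"
  proof (rule add_mono)
    have "lam * t \<le> exp (lam * t)"
      using exp_ge_add_one_self[of "lam * t"] by linarith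
    hence "exp (- lam * t) * t \<le> 1 / lam"
      using \<open>lam > 0\<close> by (simp add: exp_minus field_simps)
    thus "a * (exp (- lam * t) * t) \<le> a * (1 / lam)"
      using \<open>a \<ge> 0\<close> by (rule mult_left_mono)
    show "b * (1 - exp (- lam * t)) / lam \<le> b * 1 / lam"
      using assms by (intro divide_right_mono mult_left_mono) auto
  qed
  finally show ?thesis
    by (simp add: add_divide_distrib)
qed

lemma weighted_primitive_bound:
  fixes g :: "real \<Rightarrow> real"
  assumes "lam > 0" "a \<ge> 0" "b \<ge> 0" and "continuous_on {0..} g"
    and "\<And>u. u \<ge> 0 \<Longrightarrow> \<bar>g u\<bar> \<le> a + b * exp (lam * u)"
  shows "\<bar>weighted_primitive lam c g t\<bar> \<le> \<bar>c\<bar> + (a + b) / lam"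
proof -
  define t' where "t' = max 0 t"
  have "t' \<ge> 0" by (simp add: t'_def)
  have "exp (- lam * t') \<le> 1"
    using \<open>t' \<ge> 0\<close> \<open>lam > 0\<close> by simp
  hence "exp (- lam * t') * \<bar>c\<bar> \<le> \<bar>c\<bar>"
    by (simp add: mult_left_le_one_le)
  moreover have "exp (- lam * t') * \<bar>integral {0..t'} g\<bar> \<le> (a + b) / lam"
    using assms \<open>t' \<ge> 0\<close> by (intro exp_weighted_integral_bound) (auto intro: continuous_on_subset)
  moreover have "\<bar>weighted_primitive lam c g t\<bar>
                   \<le> exp (- lam * t') * \<bar>c\<bar> + exp (- lam * t') * \<bar>integral {0..t'} g\<bar>"
    unfolding weighted_primitive_def t'_def[symmetric] abs_mult abs_exp_cancel distrib_left[symmetric]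
    by (intro mult_left_mono abs_triangle_ineq) simp
  ultimately show ?thesis
    by linarith
qed

lemma weighted_primitive_dist:
  fixes g1 g2 :: "real \<Rightarrow> real"
  assumes "lam > 0" "b \<ge> 0" and "continuous_on {0..} g1" "continuous_on {0..} g2"
    and "\<And>u. u \<ge> 0 \<Longrightarrow> \<bar>g1 u - g2 u\<bar> \<le> b * exp (lam * u)"
  shows "\<bar>weighted_primitive lam c g1 t - weighted_primitive lam c g2 t\<bar> \<le> b / lam"
proof -
  define t' where "t' = max 0 t"
  have "t' \<ge> 0" by (simp add: t'_def)
  have "g1 integrable_on {0..t'}" "g2 integrable_on {0..t'}"
    using assms by (auto intro!: integrable_continuous_real intro: continuous_on_subset)
  hence "weighted_primitive lam c g1 t - weighted_primitive lam c g2 t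
           = exp (- lam * t') * integral {0..t'} (\<lambda>u. g1 u - g2 u)"
    by (simp add: weighted_primitive_def t'_def[symmetric] integral_diff algebra_simps)
  also have "\<bar>\<dots>\<bar> \<le> (0 + b) / lam"
    unfolding abs_mult abs_exp_cancel
    using assms \<open>t' \<ge> 0\<close>
    by (intro exp_weighted_integral_bound) (auto intro!: continuous_intros intro: continuous_on_subset)
  finally show ?thesis by simp
qed

lemma weighted_primitive_unweight:
  assumes "t \<ge> 0"
  shows "exp (lam * t) * weighted_primitive lam c g t = c + integral {0..t} g"
  using assms by (simp add: weighted_primitive_def mult.assoc[symmetric] exp_add[symmetric])

text \<open>Replacing \<open>f 0\<close> by \<open>c\<close> makes every candidate start at \<open>c\<close>, so that it glues continuously
  onto the initial datum; a fixed point of the Picard operator satisfies \<open>f 0 = c\<close> anyway.\<close>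

definition unweighted :: "real \<Rightarrow> (real \<Rightarrow>\<^sub>C real) \<Rightarrow> real \<Rightarrow> real \<Rightarrow> real" where
  "unweighted lam f c u = exp (lam * u) * (apply_bcontfun f u - apply_bcontfun f 0 + c)"

lemma unweighted_zero [simp]: "unweighted lam f c 0 = c"
  by (simp add: unweighted_def)

lemma continuous_on_unweighted: "continuous_on S (unweighted lam f c)"
  unfolding unweighted_def by (intro continuous_intros continuous_on_apply_bcontfun)

lemma unweighted_bound: "\<bar>unweighted lam f c u\<bar> \<le> exp (lam * u) * (2 * norm f + \<bar>c\<bar>)"
proof -
  have "\<bar>apply_bcontfun f u - apply_bcontfun f 0 + c\<bar> \<le> 2 * norm f + \<bar>c\<bar>"
    using norm_bounded[of f u] norm_bounded[of f 0] by (simp; linarith)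
  thus ?thesis
    unfolding unweighted_def abs_mult by (simp add: mult_left_mono)
qed

lemma unweighted_dist:
  "\<bar>unweighted lam f c u - unweighted lam g c u\<bar> \<le> exp (lam * u) * (2 * dist f g)"
proof -
  have "\<bar>(apply_bcontfun f u - apply_bcontfun g u) - (apply_bcontfun f 0 - apply_bcontfun g 0)\<bar>
          \<le> 2 * dist f g"
    using dist_bounded[of f u g] dist_bounded[of f 0 g] by (simp add: dist_real_def; linarith)
  moreover have "unweighted lam f c u - unweighted lam g c u
      = exp (lam * u) * ((apply_bcontfun f u - apply_bcontfun g u) - (apply_bcontfun f 0 - apply_bcontfun g 0))"
    by (simp add: unweighted_def algebra_simps)
  ultimately show ?thesis
    by (simp add: abs_mult mult_left_mono)
qed

type_synonym bcontfun_pair = "(real \<Rightarrow>\<^sub>C real) \<times> (real \<Rightarrow>\<^sub>C real)"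

locale lipschitz_delay_system =
  fixes tau L :: real and \<phi> \<psi> :: "real \<Rightarrow> real"
    and F1 :: "real \<Rightarrow> real \<Rightarrow> real" and F2 :: "real \<Rightarrow> real \<Rightarrow> real \<Rightarrow> real"
  assumes tau_nonneg: "tau \<ge> 0" and L_nonneg: "L \<ge> 0"
    and continuous_phi: "continuous_on {-tau..0} \<phi>"
    and continuous_psi: "continuous_on {-tau..0} \<psi>"
    and F1_lipschitz: "\<And>a b a' b'. \<bar>F1 a b - F1 a' b'\<bar> \<le> L * (\<bar>a - a'\<bar> + \<bar>b - b'\<bar>)"
    and F2_lipschitz: "\<And>b c d b' c' d'.
          \<bar>F2 b c d - F2 b' c' d'\<bar> \<le> L * (\<bar>b - b'\<bar> + \<bar>c - c'\<bar> + \<bar>d - d'\<bar>)"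
begin

lemma continuous_on_F1:
  assumes "continuous_on S p" "continuous_on S q"
  shows "continuous_on S (\<lambda>u. F1 (p u) (q u))"
proof -
  have "(2 * L)-lipschitz_on UNIV (\<lambda>z. F1 (fst z) (snd z))"
  proof (rule lipschitz_onI)
    fix z w :: "real \<times> real"
    have "\<bar>fst z - fst w\<bar> + \<bar>snd z - snd w\<bar> \<le> 2 * dist z w"
      using dist_fst_le[of z w] dist_snd_le[of z w] by (simp add: dist_real_def)
    hence bound: "L * (\<bar>fst z - fst w\<bar> + \<bar>snd z - snd w\<bar>) \<le> L * (2 * dist z w)"
      using L_nonneg by (rule mult_left_mono)
    show "dist (F1 (fst z) (snd z)) (F1 (fst w) (snd w)) \<le> 2 * L * dist z w"
      using order_trans[OF F1_lipschitz bound] by (simp add: dist_real_def ac_simps)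
  qed (use L_nonneg in simp)
  from continuous_on_compose2[OF lipschitz_on_continuous_on[OF this] continuous_on_Pair[OF assms]]
  show ?thesis by simp
qed

lemma continuous_on_F2:
  assumes "continuous_on S p" "continuous_on S q" "continuous_on S r"
  shows "continuous_on S (\<lambda>u. F2 (p u) (q u) (r u))"
proof -
  have "(3 * L)-lipschitz_on UNIV (\<lambda>z. F2 (fst z) (fst (snd z)) (snd (snd z)))"
  proof (rule lipschitz_onI)
    fix z w :: "real \<times> real \<times> real"
    have "\<bar>fst z - fst w\<bar> + \<bar>fst (snd z) - fst (snd w)\<bar> + \<bar>snd (snd z) - snd (snd w)\<bar>
            \<le> 3 * dist z w"
      using dist_fst_le[of z w] dist_snd_le[of z w] dist_fst_le[of "snd z" "snd w"]
        dist_snd_le[of "snd z" "snd w"] by (simp add: dist_real_def)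
    hence bound: "L * (\<bar>fst z - fst w\<bar> + \<bar>fst (snd z) - fst (snd w)\<bar> + \<bar>snd (snd z) - snd (snd w)\<bar>)
             \<le> L * (3 * dist z w)"
      using L_nonneg by (rule mult_left_mono)
    show "dist (F2 (fst z) (fst (snd z)) (snd (snd z))) (F2 (fst w) (fst (snd w)) (snd (snd w)))
            \<le> 3 * L * dist z w"
      using order_trans[OF F2_lipschitz bound] by (simp add: dist_real_def ac_simps)
  qed (use L_nonneg in simp)
  from continuous_on_compose2[OF lipschitz_on_continuous_on[OF this]
      continuous_on_Pair[OF assms(1) continuous_on_Pair[OF assms(2,3)]]]
  show ?thesis by simp
qed

text \<open>A candidate solution is a pair of bounded continuous functions on the real line, read
  through the weight \<open>exp (lam * t)\<close> (Bielecki's trick). Each component of the Picard operator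
  moves by at most \<open>6 * L * dist p q / lam\<close>, so \<open>lam = 24 * L + 1\<close> makes it a contraction.\<close>

definition lam :: real where
  "lam = 24 * L + 1"

definition trajectory_x :: "bcontfun_pair \<Rightarrow> real \<Rightarrow> real" where
  "trajectory_x p v = (if v \<le> 0 then \<phi> v else unweighted lam (fst p) (\<phi> 0) v)"

definition trajectory_y :: "bcontfun_pair \<Rightarrow> real \<Rightarrow> real" where
  "trajectory_y p v = (if v \<le> 0 then \<psi> v else unweighted lam (snd p) (\<psi> 0) v)"

definition field_x :: "bcontfun_pair \<Rightarrow> real \<Rightarrow> real" where
  "field_x p u = F1 (trajectory_x p u) (trajectory_y p u)"

definition field_y :: "bcontfun_pair \<Rightarrow> real \<Rightarrow> real" where
  "field_y p u = F2 (trajectory_y p u) (trajectory_x p (u - tau)) (trajectory_y p (u - tau))"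

definition picard :: "bcontfun_pair \<Rightarrow> bcontfun_pair" where
  "picard p = (Bcontfun (weighted_primitive lam (\<phi> 0) (field_x p)),
               Bcontfun (weighted_primitive lam (\<psi> 0) (field_y p)))"

lemma lam_pos: "lam > 0"
  using L_nonneg by (simp add: lam_def)

lemma trajectory_nonneg_eq:
  assumes "v \<ge> 0"
  shows "trajectory_x p v = unweighted lam (fst p) (\<phi> 0) v"
    and "trajectory_y p v = unweighted lam (snd p) (\<psi> 0) v"
  using assms by (auto simp: trajectory_x_def trajectory_y_def)

lemma continuous_on_trajectory:
  "continuous_on {-tau..} (trajectory_x p)" "continuous_on {-tau..} (trajectory_y p)"
proof -
  have split: "{-tau..} = {-tau..0} \<union> {0..}"
    using tau_nonneg by auto
  show "continuous_on {-tau..} (trajectory_x p)"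
    unfolding split trajectory_x_def
    by (rule continuous_on_cases) (use continuous_phi continuous_on_unweighted in auto)
  show "continuous_on {-tau..} (trajectory_y p)"
    unfolding split trajectory_y_def
    by (rule continuous_on_cases) (use continuous_psi continuous_on_unweighted in auto)
qed

lemma continuous_on_field: "continuous_on {0..} (field_x p)" "continuous_on {0..} (field_y p)"
proof -
  have delayed: "continuous_on {0..} (\<lambda>u. f (u - tau))" if "continuous_on {-tau..} f" for f
    by (rule continuous_on_compose2[OF that]) (auto intro!: continuous_intros)
  have "continuous_on {0..} (trajectory_x p)" "continuous_on {0..} (trajectory_y p)"
    using tau_nonneg by (auto intro: continuous_on_subset[OF continuous_on_trajectory(1)]
                                     continuous_on_subset[OF continuous_on_trajectory(2)])
  thus "continuous_on {0..} (field_x p)" "continuous_on {0..} (field_y p)"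
    unfolding field_x_def field_y_def
    by (intro continuous_on_F1 continuous_on_F2 delayed continuous_on_trajectory; simp)+
qed

definition growth :: "bcontfun_pair \<Rightarrow> real" where
  "growth p = 2 * norm p + \<bar>\<phi> 0\<bar> + \<bar>\<psi> 0\<bar>"

lemma trajectory_bound:
  assumes P: "\<And>v. v \<in> {-tau..0} \<Longrightarrow> \<bar>\<phi> v\<bar> \<le> P \<and> \<bar>\<psi> v\<bar> \<le> P"
    and v: "-tau \<le> v" "v \<le> u"
  shows "\<bar>trajectory_x p v\<bar> \<le> P + exp (lam * u) * growth p"
    and "\<bar>trajectory_y p v\<bar> \<le> P + exp (lam * u) * growth p"
proof -
  have "P \<ge> 0"
    using P[of 0] tau_nonneg by auto
  have "2 * norm (fst p) + \<bar>\<phi> 0\<bar> \<le> growth p" "2 * norm (snd p) + \<bar>\<psi> 0\<bar> \<le> growth p"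
    using norm_fst_le[of "fst p" "snd p"] norm_snd_le[of "snd p" "fst p"] by (auto simp: growth_def)
  hence "\<bar>unweighted lam (fst p) (\<phi> 0) v\<bar> \<le> exp (lam * v) * growth p"
    "\<bar>unweighted lam (snd p) (\<psi> 0) v\<bar> \<le> exp (lam * v) * growth p"
    by (auto intro: order_trans[OF unweighted_bound mult_left_mono])
  moreover have "exp (lam * v) * growth p \<le> exp (lam * u) * growth p"
    using v lam_pos by (intro mult_right_mono) (auto simp: growth_def)
  moreover have "exp (lam * u) * growth p \<ge> 0"
    by (simp add: growth_def)
  ultimately show "\<bar>trajectory_x p v\<bar> \<le> P + exp (lam * u) * growth p"
    "\<bar>trajectory_y p v\<bar> \<le> P + exp (lam * u) * growth p"
    using P[of v] v \<open>P \<ge> 0\<close> by (auto simp: trajectory_x_def trajectory_y_def)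
qed

lemma trajectory_dist:
  assumes "v \<le> u"
  shows "\<bar>trajectory_x p v - trajectory_x q v\<bar> \<le> exp (lam * u) * (2 * dist p q)"
    and "\<bar>trajectory_y p v - trajectory_y q v\<bar> \<le> exp (lam * u) * (2 * dist p q)"
proof -
  have "\<bar>unweighted lam (fst p) (\<phi> 0) v - unweighted lam (fst q) (\<phi> 0) v\<bar> \<le> exp (lam * v) * (2 * dist p q)"
    "\<bar>unweighted lam (snd p) (\<psi> 0) v - unweighted lam (snd q) (\<psi> 0) v\<bar> \<le> exp (lam * v) * (2 * dist p q)"
    using dist_fst_le[of p q] dist_snd_le[of p q]
    by (auto intro: order_trans[OF unweighted_dist mult_left_mono])
  moreover have "exp (lam * v) * (2 * dist p q) \<le> exp (lam * u) * (2 * dist p q)"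
    using assms lam_pos by (intro mult_right_mono) auto
  ultimately show "\<bar>trajectory_x p v - trajectory_x q v\<bar> \<le> exp (lam * u) * (2 * dist p q)"
    "\<bar>trajectory_y p v - trajectory_y q v\<bar> \<le> exp (lam * u) * (2 * dist p q)"
    by (auto simp: trajectory_x_def trajectory_y_def)
qed

lemma initial_bound:
  obtains P where "P \<ge> 0" "\<And>v. v \<in> {-tau..0} \<Longrightarrow> \<bar>\<phi> v\<bar> \<le> P \<and> \<bar>\<psi> v\<bar> \<le> P"
proof -
  have "continuous_on {-tau..0} (\<lambda>v. \<bar>\<phi> v\<bar> + \<bar>\<psi> v\<bar>)"
    using continuous_phi continuous_psi by (intro continuous_intros)
  hence "\<exists>m\<in>{-tau..0}. \<forall>v\<in>{-tau..0}. \<bar>\<phi> v\<bar> + \<bar>\<psi> v\<bar> \<le> \<bar>\<phi> m\<bar> + \<bar>\<psi> m\<bar>"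
    using tau_nonneg by (intro continuous_attains_sup) auto
  then obtain m where max: "\<And>v. v \<in> {-tau..0} \<Longrightarrow> \<bar>\<phi> v\<bar> + \<bar>\<psi> v\<bar> \<le> \<bar>\<phi> m\<bar> + \<bar>\<psi> m\<bar>"
    by blast
  show thesis
  proof (rule that)
    fix v assume "v \<in> {-tau..0}"
    thus "\<bar>\<phi> v\<bar> \<le> \<bar>\<phi> m\<bar> + \<bar>\<psi> m\<bar> \<and> \<bar>\<psi> v\<bar> \<le> \<bar>\<phi> m\<bar> + \<bar>\<psi> m\<bar>"
      using max[of v] abs_ge_zero[of "\<phi> v"] abs_ge_zero[of "\<psi> v"] by linarith
  qed simp
qed

lemma F1_bound: "\<bar>F1 a b\<bar> \<le> \<bar>F1 0 0\<bar> + L * (\<bar>a\<bar> + \<bar>b\<bar>)"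
  using F1_lipschitz[of a b 0 0] abs_triangle_ineq2[of "F1 a b" "F1 0 0"] by simp

lemma F2_bound: "\<bar>F2 b c d\<bar> \<le> \<bar>F2 0 0 0\<bar> + L * (\<bar>b\<bar> + \<bar>c\<bar> + \<bar>d\<bar>)"
  using F2_lipschitz[of b c d 0 0 0] abs_triangle_ineq2[of "F2 b c d" "F2 0 0 0"] by simp

lemma field_growth:
  obtains a b where "a \<ge> 0" "b \<ge> 0"
    "\<And>u. u \<ge> 0 \<Longrightarrow> \<bar>field_x p u\<bar> \<le> a + b * exp (lam * u)"
    "\<And>u. u \<ge> 0 \<Longrightarrow> \<bar>field_y p u\<bar> \<le> a + b * exp (lam * u)"
proof -
  obtain P where "P \<ge> 0" and P: "\<And>v. v \<in> {-tau..0} \<Longrightarrow> \<bar>\<phi> v\<bar> \<le> P \<and> \<bar>\<psi> v\<bar> \<le> P"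
    using initial_bound by blast
  define a where "a = \<bar>F1 0 0\<bar> + \<bar>F2 0 0 0\<bar> + 3 * L * P"
  define b where "b = 3 * L * growth p"
  have "growth p \<ge> 0" by (simp add: growth_def)
  show thesis
  proof (rule that[of a b])
    show "a \<ge> 0" "b \<ge> 0"
      using \<open>P \<ge> 0\<close> \<open>growth p \<ge> 0\<close> L_nonneg by (simp_all add: a_def b_def)
    fix u :: real assume "u \<ge> 0"
    define T where "T = P + exp (lam * u) * growth p"
    have "T \<ge> 0" using \<open>P \<ge> 0\<close> \<open>growth p \<ge> 0\<close> by (simp add: T_def)
    have "\<bar>trajectory_x p u\<bar> \<le> T" "\<bar>trajectory_y p u\<bar> \<le> T"
      "\<bar>trajectory_x p (u - tau)\<bar> \<le> T" "\<bar>trajectory_y p (u - tau)\<bar> \<le> T"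
      unfolding T_def using \<open>u \<ge> 0\<close> tau_nonneg by (auto intro!: trajectory_bound P)
    hence "L * (\<bar>trajectory_x p u\<bar> + \<bar>trajectory_y p u\<bar>) \<le> L * (3 * T)"
      "L * (\<bar>trajectory_y p u\<bar> + \<bar>trajectory_x p (u - tau)\<bar> + \<bar>trajectory_y p (u - tau)\<bar>) \<le> L * (3 * T)"
      using L_nonneg \<open>T \<ge> 0\<close> by (intro mult_left_mono; simp)+
    moreover have "L * (3 * T) = 3 * L * P + b * exp (lam * u)"
      by (simp add: T_def b_def algebra_simps)
    ultimately show "\<bar>field_x p u\<bar> \<le> a + b * exp (lam * u)" "\<bar>field_y p u\<bar> \<le> a + b * exp (lam * u)"
      unfolding field_x_def field_y_def a_def
      using F1_bound[of "trajectory_x p u" "trajectory_y p u"]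
        F2_bound[of "trajectory_y p u" "trajectory_x p (u - tau)" "trajectory_y p (u - tau)"]
      by linarith+
  qed
qed

lemma picard_apply:
  "apply_bcontfun (fst (picard p)) = weighted_primitive lam (\<phi> 0) (field_x p)"
  "apply_bcontfun (snd (picard p)) = weighted_primitive lam (\<psi> 0) (field_y p)"
proof -
  obtain a b where ab: "a \<ge> 0" "b \<ge> 0"
    "\<And>u. u \<ge> 0 \<Longrightarrow> \<bar>field_x p u\<bar> \<le> a + b * exp (lam * u)"
    "\<And>u. u \<ge> 0 \<Longrightarrow> \<bar>field_y p u\<bar> \<le> a + b * exp (lam * u)"
    using field_growth by blast
  have "weighted_primitive lam (\<phi> 0) (field_x p) \<in> bcontfun"
    using weighted_primitive_bound[OF lam_pos ab(1,2) continuous_on_field(1) ab(3)]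
    by (intro bcontfun_normI[OF continuous_on_weighted_primitive[OF continuous_on_field(1)]]) simp
  moreover have "weighted_primitive lam (\<psi> 0) (field_y p) \<in> bcontfun"
    using weighted_primitive_bound[OF lam_pos ab(1,2) continuous_on_field(2) ab(4)]
    by (intro bcontfun_normI[OF continuous_on_weighted_primitive[OF continuous_on_field(2)]]) simp
  ultimately show "apply_bcontfun (fst (picard p)) = weighted_primitive lam (\<phi> 0) (field_x p)"
    "apply_bcontfun (snd (picard p)) = weighted_primitive lam (\<psi> 0) (field_y p)"
    by (simp_all add: picard_def Bcontfun_inverse)
qed

lemma field_dist:
  "\<bar>field_x p u - field_x q u\<bar> \<le> 6 * L * dist p q * exp (lam * u)"
  "\<bar>field_y p u - field_y q u\<bar> \<le> 6 * L * dist p q * exp (lam * u)"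
proof -
  define D where "D = exp (lam * u) * (2 * dist p q)"
  have "\<bar>trajectory_x p v - trajectory_x q v\<bar> \<le> D" "\<bar>trajectory_y p v - trajectory_y q v\<bar> \<le> D"
    if "v \<le> u" for v
    unfolding D_def using that by (rule trajectory_dist)+
  hence "\<bar>trajectory_x p u - trajectory_x q u\<bar> \<le> D" "\<bar>trajectory_y p u - trajectory_y q u\<bar> \<le> D"
    "\<bar>trajectory_x p (u - tau) - trajectory_x q (u - tau)\<bar> \<le> D"
    "\<bar>trajectory_y p (u - tau) - trajectory_y q (u - tau)\<bar> \<le> D"
    using tau_nonneg by simp_all
  hence "L * (\<bar>trajectory_x p u - trajectory_x q u\<bar> + \<bar>trajectory_y p u - trajectory_y q u\<bar>) \<le> L * (3 * D)"
    "L * (\<bar>trajectory_y p u - trajectory_y q u\<bar> + \<bar>trajectory_x p (u - tau) - trajectory_x q (u - tau)\<bar>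
           + \<bar>trajectory_y p (u - tau) - trajectory_y q (u - tau)\<bar>) \<le> L * (3 * D)"
    using L_nonneg by (intro mult_left_mono; simp)+
  moreover have "L * (3 * D) = 6 * L * dist p q * exp (lam * u)"
    by (simp add: D_def)
  ultimately show "\<bar>field_x p u - field_x q u\<bar> \<le> 6 * L * dist p q * exp (lam * u)"
    "\<bar>field_y p u - field_y q u\<bar> \<le> 6 * L * dist p q * exp (lam * u)"
    unfolding field_x_def field_y_def
    using F1_lipschitz[of "trajectory_x p u" "trajectory_y p u" "trajectory_x q u" "trajectory_y q u"]
      F2_lipschitz[of "trajectory_y p u" "trajectory_x p (u - tau)" "trajectory_y p (u - tau)"
        "trajectory_y q u" "trajectory_x q (u - tau)" "trajectory_y q (u - tau)"]
    by linarith+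
qed

lemma picard_contraction: "dist (picard p) (picard q) \<le> 1 / 2 * dist p q"
proof -
  have "6 * L * dist p q \<ge> 0"
    using L_nonneg by simp
  hence "\<bar>weighted_primitive lam (\<phi> 0) (field_x p) t - weighted_primitive lam (\<phi> 0) (field_x q) t\<bar>
           \<le> 6 * L * dist p q / lam"
    "\<bar>weighted_primitive lam (\<psi> 0) (field_y p) t - weighted_primitive lam (\<psi> 0) (field_y q) t\<bar>
           \<le> 6 * L * dist p q / lam" for t
    using lam_pos continuous_on_field[of p] continuous_on_field[of q] field_dist[where p=p and q=q]
    by (intro weighted_primitive_dist; simp)+
  hence "dist (fst (picard p)) (fst (picard q)) \<le> 6 * L * dist p q / lam"
    "dist (snd (picard p)) (snd (picard q)) \<le> 6 * L * dist p q / lam"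
    by (intro dist_bound; simp add: picard_apply dist_real_def)+
  moreover have "dist (picard p) (picard q)
      \<le> dist (fst (picard p)) (fst (picard q)) + dist (snd (picard p)) (snd (picard q))"
    using dist_Pair_Pair[of "fst (picard p)" "snd (picard p)" "fst (picard q)" "snd (picard q)"]
    by (simp add: sqrt_sum_squares_le_sum)
  moreover have "12 * L * dist p q / lam \<le> 1 / 2 * dist p q"
    using lam_pos L_nonneg by (simp add: lam_def field_simps)
  ultimately show ?thesis
    by simp
qed

lemma fixed_point_integral_equation:
  assumes "picard p = p" and "t \<ge> 0"
  shows "trajectory_x p t = \<phi> 0 + integral {0..t} (field_x p)"
    and "trajectory_y p t = \<psi> 0 + integral {0..t} (field_y p)"
proof -
  have "apply_bcontfun (fst p) = weighted_primitive lam (\<phi> 0) (field_x p)"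
    "apply_bcontfun (snd p) = weighted_primitive lam (\<psi> 0) (field_y p)"
    using picard_apply[of p] assms(1) by simp_all
  thus "trajectory_x p t = \<phi> 0 + integral {0..t} (field_x p)"
    "trajectory_y p t = \<psi> 0 + integral {0..t} (field_y p)"
    using \<open>t \<ge> 0\<close>
    by (simp_all add: trajectory_nonneg_eq unweighted_def weighted_primitive_unweight
                      weighted_primitive_def[of _ _ _ 0])
qed

theorem solution_exists:
  obtains x y where "continuous_on {-tau..} x" "continuous_on {-tau..} y"
    "\<And>t. t \<in> {-tau..0} \<Longrightarrow> x t = \<phi> t \<and> y t = \<psi> t"
    "\<And>t. t \<ge> 0 \<Longrightarrow> (x has_real_derivative F1 (x t) (y t)) (at t within {0..})"
    "\<And>t. t \<ge> 0 \<Longrightarrow> (y has_real_derivative F2 (y t) (x (t - tau)) (y (t - tau))) (at t within {0..})"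
proof -
  obtain p where fixed: "picard p = p"
    using banach_fix_type[of "1 / 2" picard] picard_contraction by auto
  show thesis
  proof (rule that[of "trajectory_x p" "trajectory_y p"])
    fix t :: real
    show "t \<in> {-tau..0} \<Longrightarrow> trajectory_x p t = \<phi> t \<and> trajectory_y p t = \<psi> t"
      by (simp add: trajectory_x_def trajectory_y_def)
    assume "t \<ge> 0"
    have "((\<lambda>v. \<phi> 0 + integral {0..v} (field_x p)) has_real_derivative field_x p t) (at t within {0..})"
      using continuous_on_field(1) \<open>t \<ge> 0\<close> by (rule has_real_derivative_primitive)
    hence "(trajectory_x p has_real_derivative field_x p t) (at t within {0..})"
      by (rule has_field_derivative_transform_within[OF _ zero_less_one])
         (use \<open>t \<ge> 0\<close> fixed_point_integral_equation(1)[OF fixed] in auto)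
    thus "(trajectory_x p has_real_derivative F1 (trajectory_x p t) (trajectory_y p t)) (at t within {0..})"
      by (simp add: field_x_def)
    have "((\<lambda>v. \<psi> 0 + integral {0..v} (field_y p)) has_real_derivative field_y p t) (at t within {0..})"
      using continuous_on_field(2) \<open>t \<ge> 0\<close> by (rule has_real_derivative_primitive)
    hence "(trajectory_y p has_real_derivative field_y p t) (at t within {0..})"
      by (rule has_field_derivative_transform_within[OF _ zero_less_one])
         (use \<open>t \<ge> 0\<close> fixed_point_integral_equation(2)[OF fixed] in auto)
    thus "(trajectory_y p has_real_derivative
             F2 (trajectory_y p t) (trajectory_x p (t - tau)) (trajectory_y p (t - tau))) (at t within {0..})"
      by (simp add: field_y_def)
  qed (rule continuous_on_trajectory)+
qed

end

section \<open>The truncated predator-prey system\<close>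

lemma clamp_real: "0 \<le> A \<Longrightarrow> clamp 0 A a = max 0 (min a (A :: real))"
  unfolding clamp_def Basis_real_def by auto

lemma clamp_real_lipschitz:
  fixes a a' A :: real
  shows "\<bar>clamp 0 A a - clamp 0 A a'\<bar> \<le> \<bar>a - a'\<bar>"
  using dist_clamps_le_dist_args[of 0 A a a'] by (simp add: dist_real_def)

lemma clamped_logistic_field_lipschitz:
  fixes A B a b a' b' :: real
  assumes "0 \<le> A" "0 \<le> B"
  defines "F \<equiv> \<lambda>a b. clamp 0 A a * (1 - clamp 0 A a - clamp 0 B b)"
  shows "\<bar>F a b - F a' b'\<bar> \<le> (1 + 3 * max A B) * (\<bar>a - a'\<bar> + \<bar>b - b'\<bar>)"
proof -
  have bounded: "\<bar>clamp 0 A u\<bar> \<le> max A B" "\<bar>clamp 0 B u\<bar> \<le> max A B" for u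
    using assms by (auto simp: clamp_real)
  have "\<bar>F a b - F a' b'\<bar> \<le> (1 + 3 * max A B) * (\<bar>clamp 0 A a - clamp 0 A a'\<bar> + \<bar>clamp 0 B b - clamp 0 B b'\<bar>)"
    using logistic_field_lipschitz[where a="clamp 0 A a" and a'="clamp 0 A a'" and b="clamp 0 B b"
        and b'="clamp 0 B b'", OF bounded(1) bounded(1) bounded(2)]
    by (simp add: F_def algebra_simps)
  also have "\<dots> \<le> (1 + 3 * max A B) * (\<bar>a - a'\<bar> + \<bar>b - b'\<bar>)"
    using assms by (intro mult_left_mono add_mono clamp_real_lipschitz) auto
  finally show ?thesis .
qed

lemma clamped_delay_field_lipschitz:
  fixes A B K s b c d b' c' d' :: real
  assumes "0 \<le> A" "0 \<le> B" "K \<ge> 0"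
  defines "G \<equiv> \<lambda>b c d. - s * b + K * clamp 0 B d * clamp 0 A c"
  shows "\<bar>G b c d - G b' c' d'\<bar> \<le> \<bar>s\<bar> * \<bar>b - b'\<bar> + K * max A B * (\<bar>c - c'\<bar> + \<bar>d - d'\<bar>)"
proof -
  have bounded: "\<bar>clamp 0 A u\<bar> \<le> max A B" "\<bar>clamp 0 B u\<bar> \<le> max A B" for u
    using assms by (auto simp: clamp_real)
  have "\<bar>G b c d - G b' c' d'\<bar>
          \<le> \<bar>s\<bar> * \<bar>b - b'\<bar> + K * max A B * (\<bar>clamp 0 A c - clamp 0 A c'\<bar> + \<bar>clamp 0 B d - clamp 0 B d'\<bar>)"
    using delay_field_lipschitz[where c="clamp 0 A c" and c'="clamp 0 A c'" and d="clamp 0 B d"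
        and d'="clamp 0 B d'" and s=s and K=K and b=b and b'=b', OF bounded(1) bounded(2)] \<open>K \<ge> 0\<close>
    by (simp add: G_def)
  also have "\<dots> \<le> \<bar>s\<bar> * \<bar>b - b'\<bar> + K * max A B * (\<bar>c - c'\<bar> + \<bar>d - d'\<bar>)"
    using assms by (intro add_left_mono mult_left_mono add_mono clamp_real_lipschitz) auto
  finally show ?thesis .
qed

lemma truncated_system_lipschitz:
  fixes s K A B tau :: real
  assumes "s > 0" "K \<ge> 0" "0 \<le> A" "0 \<le> B" "tau \<ge> 0"
    and "continuous_on {-tau..0} \<phi>" "continuous_on {-tau..0} \<psi>"
  shows "lipschitz_delay_system tau (1 + 3 * max A B + s + K * max A B) \<phi> \<psi>
           (\<lambda>a b. clamp 0 A a * (1 - clamp 0 A a - clamp 0 B b))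
           (\<lambda>b c d. - s * b + K * clamp 0 B d * clamp 0 A c)"
proof
  fix a b c d a' b' c' d' :: real
  have "\<bar>clamp 0 A a * (1 - clamp 0 A a - clamp 0 B b) - clamp 0 A a' * (1 - clamp 0 A a' - clamp 0 B b')\<bar>
          \<le> (1 + 3 * max A B) * (\<bar>a - a'\<bar> + \<bar>b - b'\<bar>)"
    using \<open>0 \<le> A\<close> \<open>0 \<le> B\<close> by (rule clamped_logistic_field_lipschitz)
  also have "\<dots> \<le> (1 + 3 * max A B + s + K * max A B) * (\<bar>a - a'\<bar> + \<bar>b - b'\<bar>)"
    using assms by (intro mult_right_mono) auto
  finally show "\<bar>clamp 0 A a * (1 - clamp 0 A a - clamp 0 B b) - clamp 0 A a' * (1 - clamp 0 A a' - clamp 0 B b')\<bar>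
          \<le> (1 + 3 * max A B + s + K * max A B) * (\<bar>a - a'\<bar> + \<bar>b - b'\<bar>)" .
  have "\<bar>(- s * b + K * clamp 0 B d * clamp 0 A c) - (- s * b' + K * clamp 0 B d' * clamp 0 A c')\<bar>
          \<le> \<bar>s\<bar> * \<bar>b - b'\<bar> + K * max A B * (\<bar>c - c'\<bar> + \<bar>d - d'\<bar>)"
    using \<open>0 \<le> A\<close> \<open>0 \<le> B\<close> \<open>K \<ge> 0\<close> by (rule clamped_delay_field_lipschitz)
  also have "\<dots> \<le> (1 + 3 * max A B + s + K * max A B) * (\<bar>b - b'\<bar> + \<bar>c - c'\<bar> + \<bar>d - d'\<bar>)"
    using assms by (simp add: algebra_simps mult_left_mono add_mono)
  finally show "\<bar>(- s * b + K * clamp 0 B d * clamp 0 A c) - (- s * b' + K * clamp 0 B d' * clamp 0 A c')\<bar>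
          \<le> (1 + 3 * max A B + s + K * max A B) * (\<bar>b - b'\<bar> + \<bar>c - c'\<bar> + \<bar>d - d'\<bar>)" .
qed (use assms in auto)

lemma delayed_sum_has_derivative:
  fixes x y :: "real \<Rightarrow> real"
  assumes "tau \<ge> 0" "t \<ge> tau"
    and "(x has_real_derivative x') (at (t - tau) within {0..})"
    and "(y has_real_derivative y') (at t within {0..})"
  shows "((\<lambda>t. K * x (t - tau) + y t) has_real_derivative K * x' + y') (at t within {tau..})"
proof -
  have "((\<lambda>t. x (t - tau)) has_real_derivative x') (at t within {0 + tau..})"
    using assms(3) by (rule has_real_derivative_shift)
  moreover have "(y has_real_derivative y') (at t within {tau..})"
    using assms(4) by (rule DERIV_subset) (use \<open>tau \<ge> 0\<close> in auto)
  ultimately show ?thesis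
    by (auto intro!: derivative_eq_intros)
qed

lemma delayed_sum_rate_bound:
  fixes K s y z w :: real
  assumes "K \<ge> 0"
  shows "K * (z * (1 - z - w)) + (- s * y + K * w * z) \<le> K * (1 + s)\<^sup>2 / 4 - s * (K * z + y)"
proof -
  \<comment> \<open>the predation terms cancel, leaving a concave quadratic in \<open>z\<close>\<close>
  have "z * (1 + s - z) \<le> (1 + s)\<^sup>2 / 4"
    using zero_le_power2[of "z - (1 + s) / 2"] by (simp add: power2_eq_square field_simps)
  hence "K * (z * (1 + s - z)) \<le> K * ((1 + s)\<^sup>2 / 4)"
    using assms by (rule mult_left_mono)
  thus ?thesis
    by (simp add: algebra_simps)
qed

lemma truncated_prey_bounds:
  fixes x y :: "real \<Rightarrow> real" and A B :: real
  assumes "1 \<le> A" "0 \<le> B" "0 \<le> x 0" "x 0 \<le> A"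
    and dx: "\<And>t. t \<ge> 0 \<Longrightarrow> (x has_real_derivative
               clamp 0 A (x t) * (1 - clamp 0 A (x t) - clamp 0 B (y t))) (at t within {0..})"
    and "t \<ge> 0"
  shows "0 \<le> x t \<and> x t \<le> A"
proof
  have "- x t \<le> 0"
  proof (rule has_real_derivative_barrier_unbounded[where f="\<lambda>t. - x t" and a=0 and S="{0..}"])
    fix u :: real assume "u \<ge> 0"
    show "((\<lambda>t. - x t) has_real_derivative - (clamp 0 A (x u) * (1 - clamp 0 A (x u) - clamp 0 B (y u))))
            (at u within {0..})"
      using dx[OF \<open>u \<ge> 0\<close>] by (rule DERIV_minus)
    assume "- x u > 0"
    thus "- (clamp 0 A (x u) * (1 - clamp 0 A (x u) - clamp 0 B (y u))) \<le> 0"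
      using \<open>1 \<le> A\<close> by (simp add: clamp_real)
  qed (use assms in auto)
  thus "0 \<le> x t" by simp
  show "x t \<le> A"
  proof (rule has_real_derivative_barrier_unbounded[where f=x and a=0 and S="{0..}"])
    fix u :: real assume "u \<ge> 0" "x u > A"
    hence "clamp 0 A (x u) = A" "clamp 0 B (y u) \<ge> 0"
      using \<open>1 \<le> A\<close> \<open>0 \<le> B\<close> by (simp_all add: clamp_real)
    thus "clamp 0 A (x u) * (1 - clamp 0 A (x u) - clamp 0 B (y u)) \<le> 0"
      using \<open>1 \<le> A\<close> by (simp add: mult_nonneg_nonpos)
  qed (use assms in auto)
qed

lemma truncated_predator_nonneg:
  fixes x y :: "real \<Rightarrow> real" and s K A B :: real
  assumes "s > 0" "K \<ge> 0" "0 \<le> A" "0 \<le> B" "0 \<le> y 0"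
    and dy: "\<And>t. t \<ge> 0 \<Longrightarrow> (y has_real_derivative
               - s * y t + K * clamp 0 B (y (t - tau)) * clamp 0 A (x (t - tau))) (at t within {0..})"
    and "t \<ge> 0"
  shows "0 \<le> y t"
proof -
  have "- y t \<le> 0"
  proof (rule has_real_derivative_barrier_unbounded[where f="\<lambda>t. - y t" and a=0 and S="{0..}"])
    fix u :: real assume "u \<ge> 0"
    show "((\<lambda>t. - y t) has_real_derivative - (- s * y u + K * clamp 0 B (y (u - tau)) * clamp 0 A (x (u - tau))))
            (at u within {0..})"
      using dy[OF \<open>u \<ge> 0\<close>] by (rule DERIV_minus)
    assume "- y u > 0"
    hence "s * y u < 0"
      using \<open>s > 0\<close> by (simp add: mult_pos_neg)
    moreover have "K * clamp 0 B (y (u - tau)) * clamp 0 A (x (u - tau)) \<ge> 0"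
      using assms(2-4) by (simp add: clamp_real)
    ultimately show "- (- s * y u + K * clamp 0 B (y (u - tau)) * clamp 0 A (x (u - tau))) \<le> 0"
      by simp
  qed (use assms in auto)
  thus ?thesis by simp
qed

lemma truncated_predator_initial_bound:
  fixes x y :: "real \<Rightarrow> real" and s K A B P :: real
  assumes "s > 0" "K \<ge> 0" "0 \<le> A" "0 \<le> B"
    and init: "\<And>t. t \<in> {-tau..0} \<Longrightarrow> 0 \<le> y t \<and> y t \<le> P"
    and dy: "\<And>t. t \<ge> 0 \<Longrightarrow> (y has_real_derivative
               - s * y t + K * clamp 0 B (y (t - tau)) * clamp 0 A (x (t - tau))) (at t within {0..})"
    and t: "t \<in> {0..tau}"
  shows "y t \<le> P + K * P * A / s"
proof (rule has_real_derivative_barrier[where f=y and a=0 and b=tau and S="{0..}"])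
  fix u :: real assume u: "u \<in> {0..tau}" "y u > P + K * P * A / s"
  \<comment> \<open>up to time \<open>tau\<close> the delayed terms are initial data\<close>
  have "u - tau \<in> {-tau..0}"
    using u by auto
  hence "clamp 0 B (y (u - tau)) \<le> P" "clamp 0 A (x (u - tau)) \<le> A" "P \<ge> 0"
    using init[of "u - tau"] assms(3,4) by (auto simp: clamp_real)
  hence "K * clamp 0 B (y (u - tau)) * clamp 0 A (x (u - tau)) \<le> K * P * A"
    using assms(2-4) by (simp add: clamp_real mult.assoc mult_left_mono mult_mono)
  also have "\<dots> \<le> s * y u - s * P"
    using u \<open>s > 0\<close> \<open>P \<ge> 0\<close> by (simp add: field_simps)
  also have "\<dots> \<le> s * y u"
    using \<open>s > 0\<close> \<open>P \<ge> 0\<close> by simp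
  finally show "- s * y u + K * clamp 0 B (y (u - tau)) * clamp 0 A (x (u - tau)) \<le> 0"
    by simp
next
  have "y 0 \<le> P" "P \<ge> 0"
    using init[of 0] t by auto
  moreover have "0 \<le> K * P * A / s"
    using assms(1-3) \<open>P \<ge> 0\<close> by simp
  ultimately show "y 0 \<le> P + K * P * A / s"
    by linarith
qed (use dy t in auto)

lemma truncated_predator_upper_bound:
  fixes x y :: "real \<Rightarrow> real" and s K A B :: real
  assumes "s > 0" "K \<ge> 0" "tau \<ge> 0" "0 \<le> A" "0 \<le> B"
    and prey: "\<And>t. t \<ge> 0 \<Longrightarrow> 0 \<le> x t \<and> x t \<le> A"
    and dx: "\<And>t. t \<ge> 0 \<Longrightarrow> (x has_real_derivative
               clamp 0 A (x t) * (1 - clamp 0 A (x t) - clamp 0 B (y t))) (at t within {0..})"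
    and dy: "\<And>t. t \<ge> 0 \<Longrightarrow> (y has_real_derivative
               - s * y t + K * clamp 0 B (y (t - tau)) * clamp 0 A (x (t - tau))) (at t within {0..})"
    and "t \<ge> tau"
  shows "y t \<le> max (K * x 0 + y tau) (K * (1 + s)\<^sup>2 / (4 * s))"
proof -
  define W where "W t = K * x (t - tau) + y t" for t
  have "W t \<le> max (W tau) (K * (1 + s)\<^sup>2 / 4 / s)"
  proof (rule linear_differential_inequality(1)[OF \<open>s > 0\<close> order_refl _ _ \<open>t \<ge> tau\<close>])
    fix u :: real assume "u \<ge> tau"
    define z where "z = clamp 0 A (x (u - tau))"
    define w where "w = clamp 0 B (y (u - tau))"
    have "z = x (u - tau)"
      using prey[of "u - tau"] \<open>u \<ge> tau\<close> \<open>0 \<le> A\<close> by (simp add: z_def clamp_real)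
    show "(W has_real_derivative K * (z * (1 - z - w)) + (- s * y u + K * w * z)) (at u within {tau..})"
      unfolding W_def z_def w_def
      using \<open>tau \<ge> 0\<close> \<open>u \<ge> tau\<close> dx[of "u - tau"] dy[of u]
      by (intro delayed_sum_has_derivative) auto
    show "K * (z * (1 - z - w)) + (- s * y u + K * w * z) \<le> K * (1 + s)\<^sup>2 / 4 - s * W u"
      using delayed_sum_rate_bound[OF \<open>K \<ge> 0\<close>, of z w s "y u"] \<open>z = x (u - tau)\<close>
      by (simp add: W_def)
  qed
  moreover have "y t \<le> W t"
    using mult_nonneg_nonneg[OF \<open>K \<ge> 0\<close>, of "x (t - tau)"] prey[of "t - tau"] \<open>t \<ge> tau\<close>
    by (simp add: W_def)
  ultimately show ?thesis
    by (simp add: W_def field_simps)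
qed

lemma truncated_solution_bounds:
  fixes x y :: "real \<Rightarrow> real" and s K tau A B P :: real
  assumes "s > 0" "K \<ge> 0" "tau \<ge> 0" "1 \<le> A" "P \<le> A"
    and B: "K * A + P + K * P * A / s \<le> B" "K * (1 + s)\<^sup>2 / (4 * s) \<le> B"
    and init: "\<And>t. t \<in> {-tau..0} \<Longrightarrow> 0 \<le> x t \<and> x t \<le> P \<and> 0 \<le> y t \<and> y t \<le> P"
    and dx: "\<And>t. t \<ge> 0 \<Longrightarrow> (x has_real_derivative
               clamp 0 A (x t) * (1 - clamp 0 A (x t) - clamp 0 B (y t))) (at t within {0..})"
    and dy: "\<And>t. t \<ge> 0 \<Longrightarrow> (y has_real_derivative
               - s * y t + K * clamp 0 B (y (t - tau)) * clamp 0 A (x (t - tau))) (at t within {0..})"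
    and "t \<ge> -tau"
  shows "0 \<le> x t \<and> x t \<le> A \<and> 0 \<le> y t \<and> y t \<le> B"
proof -
  have "0 \<le> x 0" "x 0 \<le> P" "0 \<le> y 0" "P \<ge> 0"
    using init[of 0] \<open>tau \<ge> 0\<close> by auto
  have "0 \<le> K * P * A / s" "0 \<le> K * A"
    using assms(1,2,4) \<open>P \<ge> 0\<close> by simp_all
  hence "P + K * P * A / s \<le> B" "0 \<le> B"
    using B \<open>P \<ge> 0\<close> by linarith+
  have prey: "0 \<le> x u \<and> x u \<le> A" if "u \<ge> 0" for u
    using truncated_prey_bounds[OF \<open>1 \<le> A\<close> \<open>0 \<le> B\<close> \<open>0 \<le> x 0\<close> _ dx that] \<open>x 0 \<le> P\<close> \<open>P \<le> A\<close> by simp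
  have "y u \<le> B" if "u \<in> {0..tau}" for u
    using truncated_predator_initial_bound[OF \<open>s > 0\<close> \<open>K \<ge> 0\<close> _ \<open>0 \<le> B\<close> _ dy that] init
      \<open>1 \<le> A\<close> \<open>P + K * P * A / s \<le> B\<close> by fastforce
  moreover have "y u \<le> B" if "u \<ge> tau" for u
  proof -
    have "K * x 0 \<le> K * A"
      using prey[of 0] \<open>K \<ge> 0\<close> by (simp add: mult_left_mono)
    moreover have "y tau \<le> P + K * P * A / s"
      using truncated_predator_initial_bound[OF \<open>s > 0\<close> \<open>K \<ge> 0\<close> _ \<open>0 \<le> B\<close> _ dy] init
        \<open>1 \<le> A\<close> \<open>tau \<ge> 0\<close> by fastforce
    ultimately show ?thesis
      using truncated_predator_upper_bound[OF \<open>s > 0\<close> \<open>K \<ge> 0\<close> \<open>tau \<ge> 0\<close> _ \<open>0 \<le> B\<close> prey dx dy that]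
        B \<open>1 \<le> A\<close> by auto
  qed
  ultimately show ?thesis
    using init[of t] prey[of t] truncated_predator_nonneg[OF \<open>s > 0\<close> \<open>K \<ge> 0\<close> _ \<open>0 \<le> B\<close> \<open>0 \<le> y 0\<close> dy, of t]
      \<open>t \<ge> -tau\<close> \<open>P \<le> A\<close> \<open>P + K * P * A / s \<le> B\<close> \<open>0 \<le> K * P * A / s\<close> \<open>1 \<le> A\<close>
    by (cases "t \<le> 0"; cases "t \<le> tau") auto
qed

section \<open>Existence, asymptotic bounds and positivity\<close>

lemma continuous_on_Icc_abs_bound:
  fixes f :: "real \<Rightarrow> real"
  assumes "continuous_on {a..b} f"
  obtains C where "C \<ge> 0" "\<And>v. v \<in> {a..b} \<Longrightarrow> \<bar>f v\<bar> \<le> C"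
proof -
  have "bounded (f ` {a..b})"
    by (rule compact_imp_bounded[OF compact_continuous_image[OF assms compact_Icc]])
  then obtain C where "C > 0" "\<And>v. v \<in> {a..b} \<Longrightarrow> \<bar>f v\<bar> \<le> C"
    by (auto simp: bounded_pos)
  thus thesis
    using that[of C] by simp
qed

lemma dde_solution_exists_bounded:
  assumes "s > 0" "Y > 0" "tau \<ge> 0" "init_datum tau \<phi>" "init_datum tau \<psi>"
  obtains x y C where "dde_solution s Y tau \<phi> \<psi> x y"
    "\<And>t. t \<ge> -tau \<Longrightarrow> 0 \<le> x t \<and> x t \<le> C \<and> 0 \<le> y t \<and> y t \<le> C"
proof -
  define K where "K = Y * exp (- s * tau)"
  have "K \<ge> 0"
    using \<open>Y > 0\<close> by (simp add: K_def)
  have cont: "continuous_on {-tau..0} \<phi>" "continuous_on {-tau..0} \<psi>"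
    and init_nonneg: "\<And>v. v \<in> {-tau..0} \<Longrightarrow> \<phi> v \<ge> 0 \<and> \<psi> v \<ge> 0"
    using assms(4,5) by (auto simp: init_datum_def)
  have "continuous_on {-tau..0} (\<lambda>v. \<bar>\<phi> v\<bar> + \<bar>\<psi> v\<bar>)"
    using cont by (intro continuous_intros)
  from continuous_on_Icc_abs_bound[OF this]
  obtain P where "P \<ge> 0" and P: "\<And>v. v \<in> {-tau..0} \<Longrightarrow> \<bar>\<bar>\<phi> v\<bar> + \<bar>\<psi> v\<bar>\<bar> \<le> P"
    by blast
  define A where "A = max 1 P"
  define B where "B = K * A + P + K * P * A / s + K * (1 + s)\<^sup>2 / (4 * s)"
  have "1 \<le> A" "P \<le> A"
    by (auto simp: A_def)
  have "0 \<le> K * A" "0 \<le> K * P * A / s" "0 \<le> K * (1 + s)\<^sup>2 / (4 * s)"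
    using \<open>K \<ge> 0\<close> \<open>1 \<le> A\<close> \<open>P \<ge> 0\<close> \<open>s > 0\<close> by simp_all
  hence B_large: "K * A + P + K * P * A / s \<le> B" "K * (1 + s)\<^sup>2 / (4 * s) \<le> B" and "B \<ge> 0"
    using \<open>P \<ge> 0\<close> by (simp_all add: B_def)
  interpret truncated: lipschitz_delay_system tau "1 + 3 * max A B + s + K * max A B" \<phi> \<psi>
      "\<lambda>a b. clamp 0 A a * (1 - clamp 0 A a - clamp 0 B b)" "\<lambda>b c d. - s * b + K * clamp 0 B d * clamp 0 A c"
    using \<open>s > 0\<close> \<open>K \<ge> 0\<close> \<open>1 \<le> A\<close> \<open>B \<ge> 0\<close> \<open>tau \<ge> 0\<close> cont by (intro truncated_system_lipschitz) auto
  obtain x y where cx: "continuous_on {-tau..} x" and cy: "continuous_on {-tau..} y"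
    and init: "\<And>t. t \<in> {-tau..0} \<Longrightarrow> x t = \<phi> t \<and> y t = \<psi> t"
    and dx: "\<And>t. t \<ge> 0 \<Longrightarrow> (x has_real_derivative
               clamp 0 A (x t) * (1 - clamp 0 A (x t) - clamp 0 B (y t))) (at t within {0..})"
    and dy: "\<And>t. t \<ge> 0 \<Longrightarrow> (y has_real_derivative
               - s * y t + K * clamp 0 B (y (t - tau)) * clamp 0 A (x (t - tau))) (at t within {0..})"
    using truncated.solution_exists by blast
  have "0 \<le> x t \<and> x t \<le> P \<and> 0 \<le> y t \<and> y t \<le> P" if "t \<in> {-tau..0}" for t
    using init[OF that] init_nonneg[OF that] P[OF that] by auto
  with \<open>s > 0\<close> \<open>K \<ge> 0\<close> \<open>tau \<ge> 0\<close> \<open>1 \<le> A\<close> \<open>P \<le> A\<close> B_large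
  have bounds: "0 \<le> x t \<and> x t \<le> A \<and> 0 \<le> y t \<and> y t \<le> B" if "t \<ge> -tau" for t
    using dx dy that by (rule truncated_solution_bounds)
  hence "clamp 0 A (x t) = x t" "clamp 0 B (y t) = y t" if "t \<ge> -tau" for t
    using that \<open>1 \<le> A\<close> \<open>B \<ge> 0\<close> by (simp_all add: clamp_real)
  hence "dde_solution s Y tau \<phi> \<psi> x y"
    unfolding dde_solution_def using cx cy init dx dy \<open>tau \<ge> 0\<close>
    by (auto simp: K_def algebra_simps)
  thus thesis
    using bounds by (intro that[of x y "max A B"]) fastforce+
qed

lemma Limsup_at_top_le_ereal:
  fixes f :: "real \<Rightarrow> real"
  assumes "\<And>e. e > 0 \<Longrightarrow> \<exists>T. \<forall>t\<ge>T. f t \<le> c + e"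
  shows "Limsup at_top (\<lambda>t. ereal (f t)) \<le> ereal c"
proof (rule ereal_le_epsilon2)
  fix e :: real assume "e > 0"
  then obtain T where "\<forall>t\<ge>T. f t \<le> c + e"
    using assms by blast
  hence "eventually (\<lambda>t. ereal (f t) \<le> ereal (c + e)) at_top"
    by (auto simp: eventually_at_top_linorder)
  hence "Limsup at_top (\<lambda>t. ereal (f t)) \<le> ereal (c + e)"
    by (rule Limsup_bounded)
  thus "Limsup at_top (\<lambda>t. ereal (f t)) \<le> ereal c + ereal e"
    by simp
qed

lemma dde_solution_limsup_x:
  assumes sol: "dde_solution s Y tau \<phi> \<psi> x y"
    and nonneg: "\<And>t. t \<ge> 0 \<Longrightarrow> 0 \<le> x t \<and> 0 \<le> y t"
  shows "Limsup at_top (\<lambda>t. ereal (x t)) \<le> ereal 1"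
proof (rule Limsup_at_top_le_ereal)
  fix e :: real assume "e > 0"
  have "\<exists>T\<ge>0. \<forall>t\<ge>T. x t \<le> 1 + e"
  proof (rule has_real_derivative_eventually_le[where S="{0..}" and d=e])
    fix t :: real assume t: "t \<ge> 0" "x t > 1 + e"
    have "y t * x t \<ge> 0"
      using nonneg[OF t(1)] by simp
    moreover have "x t * (x t - 1) \<ge> x t - 1"
      using t \<open>e > 0\<close> mult_right_mono[of 1 "x t" "x t - 1"] by simp
    ultimately show "x t * (1 - x t) - y t * x t \<le> - e"
      using t by (simp add: algebra_simps)
  qed (use sol \<open>e > 0\<close> in \<open>auto simp: dde_solution_def\<close>)
  thus "\<exists>T. \<forall>t\<ge>T. x t \<le> 1 + e" by blast
qed

lemma dde_solution_limsup_y: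
  assumes "s > 0" "Y \<ge> 0" "tau \<ge> 0"
    and sol: "dde_solution s Y tau \<phi> \<psi> x y"
    and nonneg: "\<And>t. t \<ge> 0 \<Longrightarrow> 0 \<le> x t"
  shows "Limsup at_top (\<lambda>t. ereal (y t)) \<le> ereal (Y * exp (- s * tau) * (s + 1)\<^sup>2 / (4 * s))"
proof (rule Limsup_at_top_le_ereal)
  fix e :: real assume "e > 0"
  define K where "K = Y * exp (- s * tau)"
  have "K \<ge> 0" using \<open>Y \<ge> 0\<close> by (simp add: K_def)
  have dx: "\<And>t. t \<ge> 0 \<Longrightarrow> (x has_real_derivative x t * (1 - x t - y t)) (at t within {0..})"
    and dy: "\<And>t. t \<ge> 0 \<Longrightarrow> (y has_real_derivative - s * y t + K * y (t - tau) * x (t - tau)) (at t within {0..})"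
    using sol by (auto simp: dde_solution_def K_def algebra_simps)
  define W where "W t = K * x (t - tau) + y t" for t
  have "\<exists>T. \<forall>t\<ge>T. W t \<le> K * (1 + s)\<^sup>2 / 4 / s + e"
  proof (rule linear_differential_inequality(2)[where a=tau and S="{tau..}" and f=W
        and f'="\<lambda>u. K * (x (u - tau) * (1 - x (u - tau) - y (u - tau)))
                   + (- s * y u + K * y (u - tau) * x (u - tau))", OF \<open>s > 0\<close> order_refl _ _ \<open>e > 0\<close>])
    fix u :: real assume "u \<ge> tau"
    let ?z = "x (u - tau)" and ?w = "y (u - tau)"
    show "(W has_real_derivative K * (?z * (1 - ?z - ?w)) + (- s * y u + K * ?w * ?z)) (at u within {tau..})"
      unfolding W_def using \<open>tau \<ge> 0\<close> \<open>u \<ge> tau\<close> dx[of "u - tau"] dy[of u]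
      by (intro delayed_sum_has_derivative) auto
    show "K * (?z * (1 - ?z - ?w)) + (- s * y u + K * ?w * ?z) \<le> K * (1 + s)\<^sup>2 / 4 - s * W u"
      unfolding W_def by (rule delayed_sum_rate_bound[OF \<open>K \<ge> 0\<close>])
  qed
  then obtain T where T: "\<And>t. t \<ge> T \<Longrightarrow> W t \<le> K * (1 + s)\<^sup>2 / 4 / s + e"
    by blast
  have "y t \<le> K * (s + 1)\<^sup>2 / (4 * s) + e" if "t \<ge> max T tau" for t
    using T[of t] mult_nonneg_nonneg[OF \<open>K \<ge> 0\<close> nonneg[of "t - tau"]] that
    by (simp add: W_def algebra_simps)
  thus "\<exists>T. \<forall>t\<ge>T. y t \<le> Y * exp (- s * tau) * (s + 1)\<^sup>2 / (4 * s) + e"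
    unfolding K_def by blast
qed

lemma dde_solution_x_pos:
  assumes "tau \<ge> 0" and sol: "dde_solution s Y tau \<phi> \<psi> x y"
    and bounds: "\<And>t. t \<ge> 0 \<Longrightarrow> 0 \<le> x t \<and> x t \<le> C \<and> y t \<le> C"
    and "\<phi> 0 > 0" "t \<ge> 0"
  shows "x t > 0"
proof -
  \<comment> \<open>\<open>x' \<ge> -2 C x\<close>, so \<open>exp (2 C t) * x t\<close> does not decrease\<close>
  have "exp (2 * C * 0) * x 0 \<le> exp (2 * C * t) * x t"
  proof (rule has_real_derivative_nonneg_imp_increasing[where S="{0..}" and a=0
        and f="\<lambda>t. exp (2 * C * t) * x t"
        and f'="\<lambda>t. exp (2 * C * t) * (2 * C * x t + (x t * (1 - x t) - y t * x t))"])
    fix u :: real assume "u \<ge> 0"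
    show "((\<lambda>t. exp (2 * C * t) * x t) has_real_derivative
            exp (2 * C * u) * (2 * C * x u + (x u * (1 - x u) - y u * x u))) (at u within {0..})"
      using sol \<open>u \<ge> 0\<close> by (auto simp: dde_solution_def algebra_simps intro!: derivative_eq_intros)
    have "2 * C * x u + (x u * (1 - x u) - y u * x u) = x u * (1 + (C - x u) + (C - y u))"
      by (simp add: algebra_simps)
    also have "\<dots> \<ge> 0"
      using bounds[OF \<open>u \<ge> 0\<close>] by simp
    finally show "exp (2 * C * u) * (2 * C * x u + (x u * (1 - x u) - y u * x u)) \<ge> 0"
      by simp
  qed (use \<open>t \<ge> 0\<close> in auto)
  moreover have "x 0 = \<phi> 0"
    using sol \<open>tau \<ge> 0\<close> by (simp add: dde_solution_def)
  ultimately have "exp (2 * C * t) * x t > 0"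
    using \<open>\<phi> 0 > 0\<close> by simp
  thus ?thesis
    by (simp add: zero_less_mult_iff)
qed

lemma dde_solution_predator_stays_positive:
  assumes "Y \<ge> 0" and sol: "dde_solution s Y tau \<phi> \<psi> x y"
    and nonneg: "\<And>t. t \<ge> -tau \<Longrightarrow> 0 \<le> x t \<and> 0 \<le> y t"
    and "t0 \<ge> 0" "y t0 > 0" "t \<ge> t0"
  shows "y t > 0"
proof -
  define K where "K = Y * exp (- s * tau)"
  have dy: "\<And>u. u \<ge> 0 \<Longrightarrow> (y has_real_derivative - s * y u + K * y (u - tau) * x (u - tau)) (at u within {0..})"
    using sol by (auto simp: dde_solution_def K_def)
  \<comment> \<open>\<open>exp (s t) * y t\<close> does not decrease, since the delayed term is nonnegative\<close>
  have "exp (s * t0) * y t0 \<le> exp (s * t) * y t"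
  proof (rule has_real_derivative_nonneg_imp_increasing[where S="{0..}" and a=t0
        and f="\<lambda>t. exp (s * t) * y t" and f'="\<lambda>t. exp (s * t) * (K * y (t - tau) * x (t - tau))"])
    fix v :: real assume "v \<ge> t0"
    show "((\<lambda>t. exp (s * t) * y t) has_real_derivative exp (s * v) * (K * y (v - tau) * x (v - tau)))
            (at v within {0..})"
      using dy[of v] \<open>v \<ge> t0\<close> \<open>t0 \<ge> 0\<close> by (auto intro!: derivative_eq_intros simp: algebra_simps)
    show "exp (s * v) * (K * y (v - tau) * x (v - tau)) \<ge> 0"
      using nonneg[of "v - tau"] \<open>v \<ge> t0\<close> \<open>t0 \<ge> 0\<close> \<open>Y \<ge> 0\<close> by (simp add: K_def)
  qed (use \<open>t \<ge> t0\<close> \<open>t0 \<ge> 0\<close> in auto)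
  hence "exp (s * t) * y t > 0"
    using \<open>y t0 > 0\<close> by (smt (verit) exp_gt_zero mult_pos_pos)
  thus ?thesis
    by (simp add: zero_less_mult_iff)
qed

lemma dde_solution_y_eventually_pos:
  assumes "Y > 0" "tau \<ge> 0" and sol: "dde_solution s Y tau \<phi> \<psi> x y"
    and nonneg: "\<And>t. t \<ge> -tau \<Longrightarrow> 0 \<le> x t \<and> 0 \<le> y t"
    and "\<theta> \<in> {-tau..0}" "\<phi> \<theta> * \<psi> \<theta> > 0"
  shows "\<exists>T\<ge>0. \<forall>t>T. y t > 0"
proof -
  define K where "K = Y * exp (- s * tau)"
  have "K > 0" using \<open>Y > 0\<close> by (simp add: K_def)
  have init: "\<And>u. u \<in> {-tau..0} \<Longrightarrow> x u = \<phi> u \<and> y u = \<psi> u"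
    and dy: "\<And>u. u \<ge> 0 \<Longrightarrow> (y has_real_derivative - s * y u + K * y (u - tau) * x (u - tau)) (at u within {0..})"
    using sol by (auto simp: dde_solution_def K_def)
  define u where "u = \<theta> + tau"
  have "u \<ge> 0" using \<open>\<theta> \<in> {-tau..0}\<close> by (simp add: u_def)
  obtain t0 where "t0 \<ge> 0" "y t0 > 0"
  proof (cases "y u > 0")
    case True
    thus thesis using that \<open>u \<ge> 0\<close> by blast
  next
    case False
    \<comment> \<open>if \<open>y\<close> vanishes at time \<open>u\<close>, the delayed predation term makes it increase there\<close>
    hence "y u = 0"
      using nonneg[of u] \<open>u \<ge> 0\<close> \<open>tau \<ge> 0\<close> by simp
    moreover have "x (u - tau) = \<phi> \<theta>" "y (u - tau) = \<psi> \<theta>"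
      using init[OF \<open>\<theta> \<in> {-tau..0}\<close>] by (simp_all add: u_def)
    ultimately have "- s * y u + K * y (u - tau) * x (u - tau) > 0"
      using \<open>\<phi> \<theta> * \<psi> \<theta> > 0\<close> \<open>K > 0\<close> by (simp add: mult.commute mult.left_commute)
    from has_real_derivative_pos_inc_right[OF dy[OF \<open>u \<ge> 0\<close>] this]
    obtain d where "d > 0" "\<And>h. h > 0 \<Longrightarrow> h < d \<Longrightarrow> y u < y (u + h)"
      using \<open>u \<ge> 0\<close> by auto
    thus thesis
      using that[of "u + d / 2"] \<open>y u = 0\<close> \<open>u \<ge> 0\<close> by simp
  qed
  thus ?thesis
    using dde_solution_predator_stays_positive[OF less_imp_le[OF \<open>Y > 0\<close>] sol nonneg] by force
qed

lemma dde_solution_long_time_behaviour: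
  assumes "s > 0" "Y > 0" "tau \<ge> 0" "init_datum tau \<phi>" "init_datum tau \<psi>"
    and sol: "dde_solution s Y tau \<phi> \<psi> x y"
  shows "(\<forall>t\<ge>0. x t \<ge> 0 \<and> y t \<ge> 0)
        \<and> Limsup at_top (\<lambda>t. ereal (x t)) \<le> ereal 1
        \<and> Limsup at_top (\<lambda>t. ereal (y t)) \<le> ereal (Y * exp (- s * tau) * (s + 1)^2 / (4 * s))
        \<and> ((\<phi> 0 > 0 \<and> (\<exists>\<theta>\<in>{-tau..0}. \<phi> \<theta> * \<psi> \<theta> > 0)) \<longrightarrow>
             (\<forall>t>0. x t > 0) \<and> (\<exists>T\<ge>0. \<forall>t>T. y t > 0))"
proof -
  obtain x0 y0 C where sol0: "dde_solution s Y tau \<phi> \<psi> x0 y0"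
    and bounded0: "\<And>t. t \<ge> -tau \<Longrightarrow> 0 \<le> x0 t \<and> x0 t \<le> C \<and> 0 \<le> y0 t \<and> y0 t \<le> C"
    using dde_solution_exists_bounded[OF assms(1-5)] by blast
  have bounded: "0 \<le> x t \<and> x t \<le> C \<and> 0 \<le> y t \<and> y t \<le> C" if "t \<ge> -tau" for t
    using dde_solution_unique[OF \<open>tau \<ge> 0\<close> sol sol0 that] bounded0[OF that] by simp
  hence nonneg: "0 \<le> x t \<and> 0 \<le> y t" if "t \<ge> -tau" for t
    using that by blast
  have "\<forall>t>0. x t > 0" if "\<phi> 0 > 0"
  proof (intro allI impI)
    fix t :: real assume "t > 0"
    show "x t > 0"
      by (rule dde_solution_x_pos[where C=C, OF \<open>tau \<ge> 0\<close> sol _ that])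
         (use bounded \<open>tau \<ge> 0\<close> \<open>t > 0\<close> in auto)
  qed
  moreover have "\<exists>T\<ge>0. \<forall>t>T. y t > 0" if "\<theta> \<in> {-tau..0}" "\<phi> \<theta> * \<psi> \<theta> > 0" for \<theta>
    by (rule dde_solution_y_eventually_pos[OF \<open>Y > 0\<close> \<open>tau \<ge> 0\<close> sol nonneg that])
  moreover have "Limsup at_top (\<lambda>t. ereal (x t)) \<le> ereal 1"
    by (rule dde_solution_limsup_x[OF sol]) (use nonneg \<open>tau \<ge> 0\<close> in auto)
  moreover have "Limsup at_top (\<lambda>t. ereal (y t)) \<le> ereal (Y * exp (- s * tau) * (s + 1)^2 / (4 * s))"
    by (rule dde_solution_limsup_y[OF \<open>s > 0\<close> _ \<open>tau \<ge> 0\<close> sol])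
       (use \<open>Y > 0\<close> nonneg \<open>tau \<ge> 0\<close> in auto)
  ultimately show ?thesis
    using nonneg \<open>tau \<ge> 0\<close> by auto
qed

theorem proposition2p1:
  fixes s Y tau :: real and \<phi> \<psi> :: "real \<Rightarrow> real"
  assumes "s > 0" and "Y > 0" and "tau \<ge> 0"
    and "init_datum tau \<phi>" and "init_datum tau \<psi>"
  shows "(\<exists>x y. dde_solution s Y tau \<phi> \<psi> x y)
    \<and> (\<forall>x y x' y'. dde_solution s Y tau \<phi> \<psi> x y \<longrightarrow> dde_solution s Y tau \<phi> \<psi> x' y' \<longrightarrow>
          (\<forall>t\<ge>-tau. x t = x' t \<and> y t = y' t))
    \<and> (\<forall>x y. dde_solution s Y tau \<phi> \<psi> x y \<longrightarrow>
          (\<forall>t\<ge>0. x t \<ge> 0 \<and> y t \<ge> 0)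
        \<and> Limsup at_top (\<lambda>t. ereal (x t)) \<le> ereal 1
        \<and> Limsup at_top (\<lambda>t. ereal (y t)) \<le> ereal (Y * exp (- s * tau) * (s + 1)^2 / (4 * s))
        \<and> ((\<phi> 0 > 0 \<and> (\<exists>\<theta>\<in>{-tau..0}. \<phi> \<theta> * \<psi> \<theta> > 0)) \<longrightarrow>
             (\<forall>t>0. x t > 0) \<and> (\<exists>T\<ge>0. \<forall>t>T. y t > 0)))"
proof -
  obtain x y where "dde_solution s Y tau \<phi> \<psi> x y"
    using dde_solution_exists_bounded[OF assms] by blast
  moreover have "\<forall>t\<ge>-tau. x t = x' t \<and> y t = y' t"
    if "dde_solution s Y tau \<phi> \<psi> x y" "dde_solution s Y tau \<phi> \<psi> x' y'" for x y x' y'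
    using dde_solution_unique[OF \<open>tau \<ge> 0\<close> that] by blast
  ultimately show ?thesis
    using dde_solution_long_time_behaviour[OF assms] by blast
qed

end
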